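(* Let $\mathrm{G}_0$ be a real form of a complex semisimple Lie group, with a given Iwasawa factorization $\mathrm{G}_0=\mathrm{K}_0\mathrm{A}_0\mathrm{N}_0$. Then the Toda vector field on $\mathfrak{g}_0$ is invariant under conjugation by elements of $\mathrm{M}_0=\mathrm{Z}_{\mathrm{K}_0}(\mathfrak{a}_0)$: for every $m\in\mathrm{M}_0$, the map $X\mapsto mXm^{-1}$ on $\mathfrak{g}_0$ maps the Toda vector field to itself.
   Context: A real form $\mathrm{G}_0$ of a connected complex semisimple Lie group $\mathrm{G}$ is the fixed-point set of an anti-holomorphic group involution; $\mathfrak{g}_0$ is its Lie algebra. An Iwasawa factorization of $\mathrm{G}_0$ is given by a Cartan involution of $\mathrm{G}_0$ with fixed-point set $\mathrm{K}_0$ and decomposition $\mathfrak{g}_0=\mathfrak{k}_0\oplus\mathfrak{p}_0$, a maximal abelian subspace $\mathfrak{a}_0\subset\mathfrak{p}_0$, and an ordering of the restricted roots of $(\mathfrak{g}_0,\mathfrak{a}_0)$; $\mathfrak{n}_0$ is the sum of the positive restricted root spaces, $\mathrm{A}_0,\mathrm{N}_0$ the connected subgroups integrating $\mathfrak{a}_0,\mathfrak{n}_0$, and $\mathfrak{u}_0=\mathfrak{a}_0\oplus\mathfrak{n}_0$, so $\mathfrak{g}_0=\mathfrak{k}_0\oplus\mathfrak{u}_0$. The Toda vector field on $\mathfrak{g}_0$ is $X'=[X,\pi_{\mathfrak{k}_0}X]$ with $\pi_{\mathfrak{k}_0}$ the projection onto $\mathfrak{k}_0$ along $\mathfrak{u}_0$.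 $\mathrm{Z}_{\mathrm{K}_0}(\mathfrak{a}_0)=\{k\in\mathrm{K}_0: kXk^{-1}=X\ \forall X\in\mathfrak{a}_0\}$. *)

theory Defs
  imports "HOL-Analysis.Analysis"
begin

text \<open>Complex Lie groups are realised as closed subgroups of GL(n,C), i.e. sets of
  matrices of type complex^'n^'n (matrix product **, inverse matrix_inv).
  Every connected complex semisimple Lie group admits such a realisation.\<close>

type_synonym 'n cmat = "complex^'n^'n"

primrec mpow :: "'n::finite cmat \<Rightarrow> nat \<Rightarrow> 'n cmat" where
  "mpow X 0 = mat 1"
| "mpow X (Suc k) = X ** mpow X k"

definition mexp :: "'n::finite cmat \<Rightarrow> 'n cmat" where
  "mexp X = (\<Sum>k. (1 / fact k) *\<^sub>R mpow X k)"

definition comm :: "'n::finite cmat \<Rightarrow> 'n cmat \<Rightarrow> 'n cmat" where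
  "comm X Y = X ** Y - Y ** X"

definition cmul :: "complex \<Rightarrow> 'n::finite cmat \<Rightarrow> 'n cmat" where
  "cmul c X = (\<chi> i j. c * X $ i $ j)"

definition lie_alg :: "'n::finite cmat set \<Rightarrow> 'n cmat set" where
  "lie_alg G = {X. \<forall>t::real. mexp (t *\<^sub>R X) \<in> G}"

definition closed_matrix_group :: "'n::finite cmat set \<Rightarrow> bool" where
  "closed_matrix_group G \<longleftrightarrow> G \<subseteq> {A. invertible A} \<and> mat 1 \<in> G
     \<and> (\<forall>a\<in>G. \<forall>b\<in>G. a ** b \<in> G) \<and> (\<forall>a\<in>G. matrix_inv a \<in> G) \<and> closed G"

definition lie_subalg :: "'n::finite cmat set \<Rightarrow> bool" where
  "lie_subalg L \<longleftrightarrow> subspace L \<and> (\<forall>X\<in>L. \<forall>Y\<in>L. comm X Y \<in> L)"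

definition lie_ideal :: "'n::finite cmat set \<Rightarrow> 'n cmat set \<Rightarrow> bool" where
  "lie_ideal L I \<longleftrightarrow> subspace I \<and> I \<subseteq> L \<and> (\<forall>X\<in>L. \<forall>Y\<in>I. comm X Y \<in> I)"

definition derived :: "'n::finite cmat set \<Rightarrow> 'n cmat set" where
  "derived I = span {comm X Y | X Y. X \<in> I \<and> Y \<in> I}"

definition lie_solvable :: "'n::finite cmat set \<Rightarrow> bool" where
  "lie_solvable I \<longleftrightarrow> (\<exists>k. (derived ^^ k) I = {0})"

definition semisimple :: "'n::finite cmat set \<Rightarrow> bool" where
  "semisimple L \<longleftrightarrow> lie_subalg L \<and> (\<forall>I. lie_ideal L I \<and> lie_solvable I \<longrightarrow> I = {0})"

definition killing :: "'n::finite cmat set \<Rightarrow> 'n cmat \<Rightarrow> 'n cmat \<Rightarrow> real" where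
  "killing L X Y =
     (let B = (SOME B. B \<subseteq> L \<and> independent B \<and> L \<subseteq> span B)
      in \<Sum>b\<in>B. representation B (comm X (comm Y b)) b)"

definition complex_semisimple_group :: "'n::finite cmat set \<Rightarrow> bool" where
  "complex_semisimple_group G \<longleftrightarrow> closed_matrix_group G \<and> connected G
     \<and> (\<forall>X\<in>lie_alg G. \<forall>c. cmul c X \<in> lie_alg G) \<and> semisimple (lie_alg G)"

definition group_hom_on :: "'n::finite cmat set \<Rightarrow> ('n cmat \<Rightarrow> 'n cmat) \<Rightarrow> bool" where
  "group_hom_on G f \<longleftrightarrow> f ` G \<subseteq> G \<and> (\<forall>a\<in>G. \<forall>b\<in>G. f (a ** b) = f a ** f b)
      \<and> continuous_on G f"

definition is_differential ::
  "'n::finite cmat set \<Rightarrow> ('n cmat \<Rightarrow> 'n cmat) \<Rightarrow> ('n cmat \<Rightarrow> 'n cmat) \<Rightarrow> bool" where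
  "is_differential G f L \<longleftrightarrow>
     (\<forall>X\<in>lie_alg G. L X \<in> lie_alg G \<and> (\<forall>t::real. f (mexp (t *\<^sub>R X)) = mexp (t *\<^sub>R L X)))"

definition antiholo_involution :: "'n::finite cmat set \<Rightarrow> ('n cmat \<Rightarrow> 'n cmat) \<Rightarrow> bool" where
  "antiholo_involution G \<sigma> \<longleftrightarrow> group_hom_on G \<sigma> \<and> (\<forall>a\<in>G. \<sigma> (\<sigma> a) = a)
     \<and> (\<exists>L. is_differential G \<sigma> L \<and> (\<forall>X\<in>lie_alg G. L (cmul \<i> X) = cmul (- \<i>) (L X)))"

definition fixed_points :: "'n::finite cmat set \<Rightarrow> ('n cmat \<Rightarrow> 'n cmat) \<Rightarrow> 'n cmat set" where
  "fixed_points G f = {a\<in>G. f a = a}"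

definition cartan_involution_alg :: "'n::finite cmat set \<Rightarrow> ('n cmat \<Rightarrow> 'n cmat) \<Rightarrow> bool" where
  "cartan_involution_alg g0 \<theta> \<longleftrightarrow>
     (\<forall>X\<in>g0. \<theta> X \<in> g0 \<and> \<theta> (\<theta> X) = X)
   \<and> (\<forall>X\<in>g0. \<forall>Y\<in>g0. \<theta> (X + Y) = \<theta> X + \<theta> Y \<and> \<theta> (comm X Y) = comm (\<theta> X) (\<theta> Y))
   \<and> (\<forall>X\<in>g0. \<forall>c::real. \<theta> (c *\<^sub>R X) = c *\<^sub>R \<theta> X)
   \<and> (\<forall>X\<in>g0. X \<noteq> 0 \<longrightarrow> - killing g0 X (\<theta> X) > 0)"

definition cartan_involution_grp ::
  "'n::finite cmat set \<Rightarrow> ('n cmat \<Rightarrow> 'n cmat) \<Rightarrow> ('n cmat \<Rightarrow> 'n cmat) \<Rightarrow> bool" where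
  "cartan_involution_grp G0 \<Theta> \<theta> \<longleftrightarrow> group_hom_on G0 \<Theta> \<and> (\<forall>a\<in>G0. \<Theta> (\<Theta> a) = a)
     \<and> is_differential G0 \<Theta> \<theta> \<and> cartan_involution_alg (lie_alg G0) \<theta>"

definition kpart :: "'n::finite cmat set \<Rightarrow> ('n cmat \<Rightarrow> 'n cmat) \<Rightarrow> 'n cmat set" where
  "kpart g0 \<theta> = {X\<in>g0. \<theta> X = X}"

definition ppart :: "'n::finite cmat set \<Rightarrow> ('n cmat \<Rightarrow> 'n cmat) \<Rightarrow> 'n cmat set" where
  "ppart g0 \<theta> = {X\<in>g0. \<theta> X = - X}"

definition abelian :: "'n::finite cmat set \<Rightarrow> bool" where
  "abelian a \<longleftrightarrow> (\<forall>X\<in>a. \<forall>Y\<in>a. comm X Y = 0)"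

definition max_abelian_in :: "'n::finite cmat set \<Rightarrow> 'n cmat set \<Rightarrow> bool" where
  "max_abelian_in p a \<longleftrightarrow> subspace a \<and> a \<subseteq> p \<and> abelian a
     \<and> (\<forall>b. subspace b \<and> a \<subseteq> b \<and> b \<subseteq> p \<and> abelian b \<longrightarrow> b = a)"

text \<open>Functionals on a0 are represented by functions vanishing outside a0.\<close>
definition root_space ::
  "'n::finite cmat set \<Rightarrow> 'n cmat set \<Rightarrow> ('n cmat \<Rightarrow> real) \<Rightarrow> 'n cmat set" where
  "root_space g0 a r = {X\<in>g0. \<forall>H\<in>a. comm H X = r H *\<^sub>R X}"

definition restricted_root ::
  "'n::finite cmat set \<Rightarrow> 'n cmat set \<Rightarrow> ('n cmat \<Rightarrow> real) \<Rightarrow> bool" where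
  "restricted_root g0 a r \<longleftrightarrow>
     (\<forall>H. H \<notin> a \<longrightarrow> r H = 0)
   \<and> (\<forall>H\<in>a. \<forall>H'\<in>a. r (H + H') = r H + r H')
   \<and> (\<forall>H\<in>a. \<forall>c. r (c *\<^sub>R H) = c * r H)
   \<and> (\<exists>H\<in>a. r H \<noteq> 0)
   \<and> root_space g0 a r \<noteq> {0}"

text \<open>An ordering of the restricted roots, given by a regular element H0 of a0:
  the positive roots are those with lambda(H0) > 0.\<close>
definition regular_element :: "'n::finite cmat set \<Rightarrow> 'n cmat set \<Rightarrow> 'n cmat \<Rightarrow> bool" where
  "regular_element g0 a H0 \<longleftrightarrow> H0 \<in> a \<and> (\<forall>r. restricted_root g0 a r \<longrightarrow> r H0 \<noteq> 0)"

definition npart :: "'n::finite cmat set \<Rightarrow> 'n cmat set \<Rightarrow> 'n cmat \<Rightarrow> 'n cmat set" where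
  "npart g0 a H0 = span (\<Union>{root_space g0 a r | r. restricted_root g0 a r \<and> r H0 > 0})"

definition upart :: "'n::finite cmat set \<Rightarrow> 'n cmat set \<Rightarrow> 'n cmat \<Rightarrow> 'n cmat set" where
  "upart g0 a H0 = {A + N | A N. A \<in> a \<and> N \<in> npart g0 a H0}"

definition proj_k :: "'n::finite cmat set \<Rightarrow> 'n cmat set \<Rightarrow> 'n cmat \<Rightarrow> 'n cmat" where
  "proj_k k u X = (THE K. K \<in> k \<and> X - K \<in> u)"

definition toda :: "'n::finite cmat set \<Rightarrow> 'n cmat set \<Rightarrow> 'n cmat \<Rightarrow> 'n cmat" where
  "toda k u X = comm X (proj_k k u X)"

end

theory Submission
  imports Defs
begin

(* For m in M0 the map Ad m : X |-> m X m^-1 is a Lie algebra automorphism of g0 which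
   commutes with theta (because Theta m = m and theta is the differential of Theta) and fixes
   a0 pointwise. Hence it preserves k0 and every restricted root space, so also n0 and
   u0 = a0 + n0. Since g0 is the direct sum of k0 and u0, the projection onto k0 along u0
   commutes with Ad m, and then so does the Toda field X |-> [X, pi_k X].

   The substance is the Iwasawa decomposition g0 = k0 (+) u0, with respect to the inner product
   B_theta X Y = - B X (theta Y). The sum is direct because a0, n0 and theta n0 lie in the zero,
   positive and negative eigenspaces of ad H0, which are B_theta-orthogonal. It is all of g0
   because the commuting, B_theta-symmetric operators ad H (H in a0) are simultaneously
   diagonalisable, and every joint eigenvector lies in k0 + u0: by maximality of a0 when the
   eigenvalues vanish, and by regularity of H0 otherwise. *)

section \<open>Square matrices as a Banach algebra\<close>

text \<open>A copy of the matrix type on which \<open>**\<close> is the multiplication, making square matrices a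
  Banach algebra, so that \<open>mexp\<close> becomes the library's \<open>exp\<close> (see \<open>mexp_eq_Rep_exp\<close>).\<close>

typedef (overloaded) ('n::finite) mat_alg = "UNIV :: 'n cmat set" ..

setup_lifting type_definition_mat_alg

lemma bounded_linear_matrix_vector_mult:
  fixes X :: "'n::finite cmat"
  shows "bounded_linear (\<lambda>v::complex^'n. X *v v)"
proof -
  have "linear (\<lambda>v::complex^'n. X *v v)"
    by (rule linearI) (simp_all add: vec_eq_iff matrix_vector_mult_def
        scaleR_sum_right distrib_left sum.distrib)
  then show ?thesis by (simp add: linear_conv_bounded_linear)
qed

lemma matrix_scaleR_mult_left: "((a::real) *\<^sub>R (X::'n::finite cmat)) ** Y = a *\<^sub>R (X ** Y)"
  by (simp add: vec_eq_iff matrix_matrix_mult_def scaleR_sum_right)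

lemma matrix_scaleR_mult_right: "(X::'n::finite cmat) ** ((a::real) *\<^sub>R Y) = a *\<^sub>R (X ** Y)"
  by (simp add: vec_eq_iff matrix_matrix_mult_def scaleR_sum_right)

lemma matrix_scaleR_vector_mult: "((a::real) *\<^sub>R (X::'n::finite cmat)) *v v = a *\<^sub>R (X *v v)"
  by (simp add: vec_eq_iff matrix_vector_mult_def scaleR_sum_right)

lemma matrix_eq_0_iff_vector_mult: "(X::'n::finite cmat) = 0 \<longleftrightarrow> (\<forall>v. X *v v = 0)"
  using matrix_eq[of X 0] by (simp add: matrix_vector_mult_def vec_eq_iff)

instantiation mat_alg :: (finite) ab_group_add
begin
lift_definition zero_mat_alg :: "'a mat_alg" is 0 .
lift_definition plus_mat_alg :: "'a mat_alg \<Rightarrow> 'a mat_alg \<Rightarrow> 'a mat_alg" is "(+)" .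
lift_definition minus_mat_alg :: "'a mat_alg \<Rightarrow> 'a mat_alg \<Rightarrow> 'a mat_alg" is "(-)" .
lift_definition uminus_mat_alg :: "'a mat_alg \<Rightarrow> 'a mat_alg" is "uminus" .
instance by standard (transfer, simp add: algebra_simps)+
end

instantiation mat_alg :: (finite) real_vector
begin
lift_definition scaleR_mat_alg :: "real \<Rightarrow> 'a mat_alg \<Rightarrow> 'a mat_alg" is "scaleR" .
instance by standard (transfer, simp add: algebra_simps)+
end

instantiation mat_alg :: (finite) real_algebra_1
begin
lift_definition times_mat_alg :: "'a mat_alg \<Rightarrow> 'a mat_alg \<Rightarrow> 'a mat_alg" is "(**)" .
lift_definition one_mat_alg :: "'a mat_alg" is "mat 1" .
instance
proof
  fix a b c :: "'a mat_alg" and r :: real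
  show "a * b * c = a * (b * c)" by transfer (simp add: matrix_mul_assoc)
  show "1 * a = a" by transfer simp
  show "a * 1 = a" by transfer simp
  show "(a + b) * c = a * c + b * c"
    by transfer (simp add: vec_eq_iff matrix_matrix_mult_def distrib_right sum.distrib)
  show "a * (b + c) = a * b + a * c" by transfer (simp add: matrix_add_ldistrib)
  show "(0::'a mat_alg) \<noteq> 1" by transfer (simp add: vec_eq_iff mat_def)
  show "r *\<^sub>R a * b = r *\<^sub>R (a * b)" by transfer (simp add: matrix_scaleR_mult_left)
  show "a * r *\<^sub>R b = r *\<^sub>R (a * b)" by transfer (simp add: matrix_scaleR_mult_right)
qed
end

instantiation mat_alg :: (finite) real_normed_algebra_1
begin
lift_definition norm_mat_alg :: "'a mat_alg \<Rightarrow> real" is "\<lambda>X. onorm (\<lambda>v::complex^'a. X *v v)" .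
definition dist_mat_alg :: "'a mat_alg \<Rightarrow> 'a mat_alg \<Rightarrow> real" where
  "dist_mat_alg x y = norm (x - y)"
definition sgn_mat_alg :: "'a mat_alg \<Rightarrow> 'a mat_alg" where
  "sgn_mat_alg x = x /\<^sub>R norm x"
definition uniformity_mat_alg :: "('a mat_alg \<times> 'a mat_alg) filter" where
  "uniformity_mat_alg = (INF e\<in>{0<..}. principal {(x, y). dist x y < e})"
definition open_mat_alg :: "'a mat_alg set \<Rightarrow> bool" where
  "open_mat_alg U = (\<forall>x\<in>U. eventually (\<lambda>(x', y). x' = x \<longrightarrow> y \<in> U) uniformity)"
instance
proof
  fix a b :: "'a mat_alg" and r :: real
  show "dist a b = norm (a - b)" by (simp add: dist_mat_alg_def)
  show "sgn a = a /\<^sub>R norm a" by (simp add: sgn_mat_alg_def)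
  show "(uniformity :: ('a mat_alg \<times> 'a mat_alg) filter)
      = (INF e\<in>{0<..}. principal {(x, y). dist x y < e})"
    by (simp add: uniformity_mat_alg_def)
  show "open U = (\<forall>x\<in>U. eventually (\<lambda>(x', y). x' = x \<longrightarrow> y \<in> U) uniformity)"
    for U :: "'a mat_alg set"
    by (simp add: open_mat_alg_def)
  show "(norm a = 0) = (a = 0)"
    by transfer (simp add: onorm_eq_0[OF bounded_linear_matrix_vector_mult]
        matrix_eq_0_iff_vector_mult[symmetric])
  show "norm (a + b) \<le> norm a + norm b"
  proof transfer
    fix A B :: "'a cmat"
    show "onorm (\<lambda>v::complex^'a. (A + B) *v v)
        \<le> onorm (\<lambda>v::complex^'a. A *v v) + onorm (\<lambda>v::complex^'a. B *v v)"
      using onorm_triangle[OF bounded_linear_matrix_vector_mult[of A] bounded_linear_matrix_vector_mult[of B]]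
      by (simp add: matrix_vector_mult_add_rdistrib)
  qed
  show "norm (r *\<^sub>R a) = \<bar>r\<bar> * norm a"
  proof transfer
    fix A :: "'a cmat" and r :: real
    show "onorm (\<lambda>v::complex^'a. (r *\<^sub>R A) *v v) = \<bar>r\<bar> * onorm (\<lambda>v::complex^'a. A *v v)"
      using onorm_scaleR[OF bounded_linear_matrix_vector_mult[of A], of r]
      by (simp add: matrix_scaleR_vector_mult)
  qed
  show "norm (a * b) \<le> norm a * norm b"
  proof transfer
    fix A B :: "'a cmat"
    have "onorm ((\<lambda>v::complex^'a. A *v v) \<circ> (\<lambda>v. B *v v))
        \<le> onorm (\<lambda>v::complex^'a. A *v v) * onorm (\<lambda>v::complex^'a. B *v v)"
      by (rule onorm_compose) (rule bounded_linear_matrix_vector_mult)+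
    then show "onorm (\<lambda>v::complex^'a. (A ** B) *v v)
        \<le> onorm (\<lambda>v::complex^'a. A *v v) * onorm (\<lambda>v::complex^'a. B *v v)"
      by (simp add: o_def matrix_vector_mul_assoc)
  qed
  show "norm (1::'a mat_alg) = 1"
    by transfer (simp add: onorm_id)
qed
end

lemma norm_vec_le_sum: "norm (x::'a::real_normed_vector^'n::finite) \<le> (\<Sum>i\<in>UNIV. norm (x $ i))"
  by (simp add: norm_vec_def L2_set_le_sum)

lemma norm_axis_1: "norm (axis j (1::complex) :: complex^'n::finite) = 1"
proof -
  have "(\<lambda>i. (norm (axis j (1::complex) $ i))\<^sup>2) = (\<lambda>i. if i = j then 1 else 0)"
    by (auto simp: axis_def)
  then show ?thesis unfolding norm_vec_def L2_set_def by (simp only:) simp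
qed

lemma norm_entry_le_norm_mat_alg: "norm (Rep_mat_alg (X::'n::finite mat_alg) $ i $ j) \<le> norm X"
proof -
  have "Rep_mat_alg X $ i $ j = (Rep_mat_alg X *v axis j 1) $ i"
    by (simp add: matrix_vector_mult_def axis_def if_distrib cong: if_cong)
  also have "norm \<dots> \<le> norm (Rep_mat_alg X *v axis j 1)"
    by (rule Finite_Cartesian_Product.norm_nth_le)
  also have "\<dots> \<le> onorm (\<lambda>v::complex^'n. Rep_mat_alg X *v v) * norm (axis j (1::complex) :: complex^'n)"
    by (rule onorm[OF bounded_linear_matrix_vector_mult])
  also have "\<dots> = norm X" by (simp add: norm_axis_1 norm_mat_alg.rep_eq)
  finally show ?thesis .
qed

lemma norm_Rep_mat_alg_le: "norm (Rep_mat_alg (X::'n::finite mat_alg)) \<le> real (CARD('n) * CARD('n)) * norm X"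
proof -
  have "norm (Rep_mat_alg X) \<le> (\<Sum>i\<in>UNIV. \<Sum>j\<in>UNIV. norm (Rep_mat_alg X $ i $ j))"
    by (rule order_trans[OF norm_vec_le_sum sum_mono[OF norm_vec_le_sum]])
  also have "\<dots> \<le> (\<Sum>i\<in>(UNIV::'n set). \<Sum>j\<in>(UNIV::'n set). norm X)"
    by (intro sum_mono norm_entry_le_norm_mat_alg)
  finally show ?thesis by simp
qed

lemma norm_matrix_vector_mult_le:
  "norm ((A::'n::finite cmat) *v v) \<le> real (CARD('n) * CARD('n)) * norm A * norm v"
proof -
  have entry: "norm (A $ i $ j * v $ j) \<le> norm A * norm v" for i j
    using Finite_Cartesian_Product.norm_nth_le[of "A $ i" j] Finite_Cartesian_Product.norm_nth_le[of A i]
      Finite_Cartesian_Product.norm_nth_le[of v j]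
    by (simp add: norm_mult mult_mono)
  have "norm (A *v v) \<le> (\<Sum>i\<in>UNIV. norm ((A *v v) $ i))" by (rule norm_vec_le_sum)
  also have "\<dots> \<le> (\<Sum>i\<in>(UNIV::'n set). \<Sum>j\<in>(UNIV::'n set). norm (A $ i $ j * v $ j))"
    unfolding matrix_vector_mult_def by (intro sum_mono) (simp add: norm_sum)
  also have "\<dots> \<le> (\<Sum>i\<in>(UNIV::'n set). \<Sum>j\<in>(UNIV::'n set). norm A * norm v)"
    by (intro sum_mono entry)
  finally show ?thesis by simp
qed

lemma norm_mat_alg_le: "norm (X::'n::finite mat_alg) \<le> real (CARD('n) * CARD('n)) * norm (Rep_mat_alg X)"
  unfolding norm_mat_alg.rep_eq
  by (rule onorm_bound) (simp, use norm_matrix_vector_mult_le in \<open>simp add: mult.assoc\<close>)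

lemma bounded_linear_Rep_mat_alg: "bounded_linear Rep_mat_alg"
proof
  show "Rep_mat_alg (x + y) = Rep_mat_alg x + Rep_mat_alg y" for x y :: "'a mat_alg"
    by transfer simp
  show "Rep_mat_alg (r *\<^sub>R x) = r *\<^sub>R Rep_mat_alg x" for r and x :: "'a mat_alg"
    by transfer simp
  show "\<exists>K. \<forall>x::'a mat_alg. norm (Rep_mat_alg x) \<le> norm x * K"
    using norm_Rep_mat_alg_le by (metis mult.commute)
qed

lemma bounded_linear_Abs_mat_alg: "bounded_linear (Abs_mat_alg :: 'n::finite cmat \<Rightarrow> 'n mat_alg)"
proof
  show "Abs_mat_alg (x + y) = (Abs_mat_alg x + Abs_mat_alg y :: 'n mat_alg)" for x y :: "'n cmat"
    by (simp add: plus_mat_alg.abs_eq eq_onp_same_args)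
  show "Abs_mat_alg (r *\<^sub>R x) = (r *\<^sub>R Abs_mat_alg x :: 'n mat_alg)" for r and x :: "'n cmat"
    by (simp add: scaleR_mat_alg.abs_eq eq_onp_same_args)
  show "\<exists>K. \<forall>x::'n cmat. norm (Abs_mat_alg x :: 'n mat_alg) \<le> norm x * K"
    using norm_mat_alg_le by (metis mult.commute Abs_mat_alg_inverse UNIV_I)
qed

instance mat_alg :: (finite) banach
proof
  fix X :: "nat \<Rightarrow> 'a mat_alg" assume "Cauchy X"
  then have "Cauchy (\<lambda>k. Rep_mat_alg (X k))"
    using bounded_linear.Cauchy[OF bounded_linear_Rep_mat_alg] by blast
  then obtain L where "(\<lambda>k. Rep_mat_alg (X k)) \<longlonglongrightarrow> L"
    using Cauchy_convergent_iff convergent_def by blast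
  from bounded_linear.tendsto[OF bounded_linear_Abs_mat_alg this]
  show "convergent X" by (auto simp: Rep_mat_alg_inverse convergent_def)
qed

lemma Rep_Abs_mat_alg [simp]: "Rep_mat_alg (Abs_mat_alg X) = X"
  by (simp add: Abs_mat_alg_inverse)

lemma Abs_mat_alg_eq_iff: "Abs_mat_alg X = Abs_mat_alg Y \<longleftrightarrow> X = Y"
  by (simp add: Abs_mat_alg_inject)

lemma Abs_mat_alg_mult: "Abs_mat_alg (X ** Y) = Abs_mat_alg X * Abs_mat_alg Y"
  by (simp add: times_mat_alg.abs_eq eq_onp_same_args)
lemma Abs_mat_alg_add: "Abs_mat_alg (X + Y) = Abs_mat_alg X + Abs_mat_alg Y"
  by (simp add: plus_mat_alg.abs_eq eq_onp_same_args)
lemma Abs_mat_alg_diff: "Abs_mat_alg (X - Y) = Abs_mat_alg X - Abs_mat_alg Y"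
  by (simp add: minus_mat_alg.abs_eq eq_onp_same_args)
lemma Abs_mat_alg_uminus: "Abs_mat_alg (- X) = - Abs_mat_alg X"
  by (simp add: uminus_mat_alg.abs_eq eq_onp_same_args)
lemma Abs_mat_alg_scaleR: "Abs_mat_alg (r *\<^sub>R X) = r *\<^sub>R Abs_mat_alg X"
  by (simp add: scaleR_mat_alg.abs_eq eq_onp_same_args)
lemma Abs_mat_alg_one: "Abs_mat_alg (mat 1) = 1"
  by (simp add: one_mat_alg_def)

lemmas Abs_mat_alg_simps =
  Abs_mat_alg_mult Abs_mat_alg_add Abs_mat_alg_diff Abs_mat_alg_uminus Abs_mat_alg_scaleR

lemma Rep_mat_alg_power: "Rep_mat_alg (x ^ k) = mpow (Rep_mat_alg x) k"
  by (induction k) (simp_all add: one_mat_alg.rep_eq times_mat_alg.rep_eq)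

section \<open>The matrix exponential\<close>

lemma mexp_eq_Rep_exp: "mexp X = Rep_mat_alg (exp (Abs_mat_alg X))"
proof -
  have "Rep_mat_alg (exp (Abs_mat_alg X)) = (\<Sum>n. Rep_mat_alg ((Abs_mat_alg X) ^ n /\<^sub>R fact n))"
    unfolding exp_def by (rule bounded_linear.suminf[OF bounded_linear_Rep_mat_alg summable_exp_generic])
  then show ?thesis
    by (simp add: mexp_def Rep_mat_alg_power scaleR_mat_alg.rep_eq divide_inverse)
qed

lemma mexp_zero: "mexp (0::'n::finite cmat) = mat 1"
  by (simp add: mexp_eq_Rep_exp zero_mat_alg_def[symmetric] one_mat_alg.rep_eq)

lemma mexp_minus_inverse: "mexp X ** mexp (- X) = mat 1" "mexp (- X) ** mexp X = mat 1"
  using exp_minus_inverse[of "Abs_mat_alg X"] exp_minus_inverse[of "- Abs_mat_alg X"]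
  by (simp_all add: mexp_eq_Rep_exp Abs_mat_alg_uminus
      flip: times_mat_alg.rep_eq one_mat_alg.rep_eq)

lemma exp_conjugate:
  fixes a b x :: "'a::{banach,real_normed_algebra_1}"
  assumes ab: "a * b = 1" "b * a = 1"
  shows "exp (a * x * b) = a * exp x * b"
proof -
  have power: "(a * x * b) ^ n = a * x ^ n * b" for n
  proof (induction n)
    case 0 then show ?case using ab by simp
  next
    case (Suc n)
    have "(a * x * b) ^ Suc n = a * x * b * (a * x ^ n * b)"
      by (simp add: Suc)
    also have "\<dots> = a * x * (b * a) * x ^ n * b"
      by (simp add: mult.assoc)
    also have "\<dots> = a * x ^ Suc n * b" using ab by (simp add: mult.assoc)
    finally show ?case .
  qed
  have "bounded_linear (\<lambda>y. a * y * b)"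
    using bounded_linear_compose[OF bounded_linear_mult_left[of b] bounded_linear_mult_right[of a]]
    by (simp add: o_def)
  then have "a * exp x * b = (\<Sum>n. a * (x ^ n /\<^sub>R fact n) * b)"
    unfolding exp_def by (rule bounded_linear.suminf[OF _ summable_exp_generic])
  then show ?thesis
    unfolding exp_def by (simp add: power)
qed

lemma mexp_conjugate:
  fixes m m' X :: "'n::finite cmat"
  assumes "m ** m' = mat 1" "m' ** m = mat 1"
  shows "mexp (m ** X ** m') = m ** mexp X ** m'"
proof -
  have "Abs_mat_alg m * Abs_mat_alg m' = 1" "Abs_mat_alg m' * Abs_mat_alg m = 1"
    using assms by (simp_all flip: Abs_mat_alg_mult Abs_mat_alg_one)
  from exp_conjugate[OF this, of "Abs_mat_alg X"] show ?thesis
    by (simp add: mexp_eq_Rep_exp Abs_mat_alg_mult times_mat_alg.rep_eq)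
qed

lemma exp_scaleR_has_vector_derivative_0:
  fixes x :: "'a::{banach,real_normed_algebra_1}"
  shows "((\<lambda>t. exp (t *\<^sub>R x)) has_vector_derivative x) (at 0)"
  using exp_scaleR_has_vector_derivative_right[of x 0 UNIV] by simp

lemma mexp_has_vector_derivative_0: "((\<lambda>t. mexp (t *\<^sub>R X)) has_vector_derivative X) (at 0)"
proof -
  from bounded_linear.has_vector_derivative[OF bounded_linear_Rep_mat_alg
      exp_scaleR_has_vector_derivative_0[of "Abs_mat_alg X"]]
  show ?thesis by (simp add: mexp_eq_Rep_exp Abs_mat_alg_scaleR)
qed

lemma mexp_scaleR_inject:
  assumes "\<forall>t. mexp (t *\<^sub>R X) = mexp (t *\<^sub>R Y)"
  shows "X = Y"
  using mexp_has_vector_derivative_0[of X] mexp_has_vector_derivative_0[of Y] assms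
    vector_derivative_unique_at by force

lemma has_vector_derivative_0_LIMSEQ:
  fixes g :: "real \<Rightarrow> 'a::real_normed_vector"
  assumes "(g has_vector_derivative D) (at 0)"
  shows "(\<lambda>n. real (Suc n) *\<^sub>R (g (1 / real (Suc n)) - g 0)) \<longlonglongrightarrow> D"
proof -
  let ?t = "\<lambda>n. 1 / real (Suc n)"
  define \<phi> where "\<phi> = (\<lambda>t. norm ((g t - g 0) - t *\<^sub>R D) / norm t)"
  have "(\<phi> \<longlongrightarrow> 0) (at 0)"
    using assms unfolding has_vector_derivative_def has_derivative_iff_norm \<phi>_def by simp
  moreover have "filterlim ?t (at (0::real)) sequentially"
    unfolding filterlim_at using LIMSEQ_inverse_real_of_nat by (simp add: divide_inverse)
  ultimately have "(\<lambda>n. \<phi> (?t n)) \<longlonglongrightarrow> 0"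
    by (rule filterlim_compose)
  moreover have "\<phi> (?t n) = norm (real (Suc n) *\<^sub>R (g (?t n) - g 0) - D)" for n
  proof -
    have "real (Suc n) *\<^sub>R (g (?t n) - g 0) - D = real (Suc n) *\<^sub>R ((g (?t n) - g 0) - ?t n *\<^sub>R D)"
      by (simp add: algebra_simps)
    then show ?thesis by (simp add: \<phi>_def divide_simps)
  qed
  ultimately show ?thesis
    by (simp add: tendsto_norm_zero_iff LIM_zero_iff)
qed

lemma norm_power_diff_le:
  fixes S T :: "'a::real_normed_algebra_1"
  assumes "norm S \<le> K" "norm T \<le> K" "1 \<le> K"
  shows "norm (S ^ n - T ^ n) \<le> real n * K ^ n * norm (S - T)"
proof (induction n)
  case 0 then show ?case by simp
next
  case (Suc n)
  have K0: "0 \<le> K" using assms by simp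
  have "norm (S * (S ^ n - T ^ n)) \<le> K * (real n * K ^ n * norm (S - T))"
    using norm_mult_ineq[of S "S ^ n - T ^ n"] Suc assms(1) K0
    by (meson mult_mono norm_ge_zero order_trans)
  moreover have "norm ((S - T) * T ^ n) \<le> norm (S - T) * K ^ n"
  proof -
    have "norm (T ^ n) \<le> K ^ n"
      using norm_power_ineq[of T n] power_mono[OF assms(2) norm_ge_zero, of n] by linarith
    then show ?thesis
      using norm_mult_ineq[of "S - T" "T ^ n"] by (meson mult_left_mono norm_ge_zero order_trans)
  qed
  moreover have "K ^ n \<le> K * K ^ n" using assms(3) K0 by (simp add: mult_le_cancel_right1)
  moreover have "S ^ Suc n - T ^ Suc n = S * (S ^ n - T ^ n) + (S - T) * T ^ n"
    by (simp add: algebra_simps)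
  ultimately have "norm (S ^ Suc n - T ^ Suc n)
      \<le> K * (real n * K ^ n * norm (S - T)) + K * K ^ n * norm (S - T)"
    using norm_triangle_ineq[of "S * (S ^ n - T ^ n)" "(S - T) * T ^ n"]
    by (smt (verit, ccfv_SIG) mult.commute mult_right_mono norm_ge_zero)
  then show ?case by (simp add: algebra_simps)
qed

lemma exp_scaleR_of_nat:
  fixes z :: "'a::{banach,real_normed_algebra_1}"
  shows "exp (real n *\<^sub>R z) = exp z ^ n"
proof (induction n)
  case 0 then show ?case by simp
next
  case (Suc n)
  have "exp (real (Suc n) *\<^sub>R z) = exp (z + real n *\<^sub>R z)" by (simp add: algebra_simps)
  also have "\<dots> = exp z * exp (real n *\<^sub>R z)"
    by (rule exp_add_commuting) simp
  finally show ?case by (simp add: Suc)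
qed

lemma norm_exp_product_power_diff_le:
  fixes x y :: "'a::{banach,real_normed_algebra_1}"
  assumes "t \<ge> 0"
  shows "norm ((exp (t *\<^sub>R x) * exp (t *\<^sub>R y)) ^ n - exp (t *\<^sub>R (x + y)) ^ n)
    \<le> real n * exp (real n * t * (norm x + norm y))
        * norm (exp (t *\<^sub>R x) * exp (t *\<^sub>R y) - exp (t *\<^sub>R (x + y)))"
proof -
  define K where "K = exp (t * (norm x + norm y))"
  have "norm (exp (t *\<^sub>R x) * exp (t *\<^sub>R y)) \<le> exp (norm (t *\<^sub>R x)) * exp (norm (t *\<^sub>R y))"
    by (rule order_trans[OF norm_mult_ineq mult_mono[OF norm_exp norm_exp]]) simp_all
  then have "norm (exp (t *\<^sub>R x) * exp (t *\<^sub>R y)) \<le> K"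
    using assms by (simp add: K_def exp_add[symmetric] algebra_simps)
  moreover have "norm (exp (t *\<^sub>R (x + y))) \<le> K"
  proof -
    have "norm (exp (t *\<^sub>R (x + y))) \<le> exp (norm (t *\<^sub>R (x + y)))" by (rule norm_exp)
    also have "\<dots> \<le> K" unfolding K_def using assms
      by (simp add: norm_triangle_ineq mult_left_mono)
    finally show ?thesis .
  qed
  moreover have "1 \<le> K" using assms by (simp add: K_def)
  ultimately have "norm ((exp (t *\<^sub>R x) * exp (t *\<^sub>R y)) ^ n - exp (t *\<^sub>R (x + y)) ^ n)
      \<le> real n * K ^ n * norm (exp (t *\<^sub>R x) * exp (t *\<^sub>R y) - exp (t *\<^sub>R (x + y)))"
    by (rule norm_power_diff_le)
  also have "K ^ n = exp (real n * t * (norm x + norm y))"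
    unfolding K_def by (simp flip: exp_of_nat_mult add: mult.assoc)
  finally show ?thesis .
qed

text \<open>The Lie product formula: \<open>exp (t x) exp (t y) - exp (t (x + y)) = o(t)\<close>, and taking
  \<open>n\<close>-th powers with \<open>t = 1/n\<close> multiplies this defect by at most \<open>n exp (norm x + norm y)\<close>.\<close>

lemma exp_Lie_product_formula:
  fixes x y :: "'a::{banach,real_normed_algebra_1}"
  shows "(\<lambda>n. (exp ((1 / real (Suc n)) *\<^sub>R x) * exp ((1 / real (Suc n)) *\<^sub>R y)) ^ Suc n)
    \<longlonglongrightarrow> exp (x + y)"
proof -
  let ?t = "\<lambda>n. 1 / real (Suc n)"
  define f where "f = (\<lambda>t::real. exp (t *\<^sub>R x) * exp (t *\<^sub>R y) - exp (t *\<^sub>R (x + y)))"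
  have "(f has_vector_derivative (exp (0 *\<^sub>R x) * y + x * exp (0 *\<^sub>R y) - (x + y))) (at 0)"
    unfolding f_def
    by (intro has_vector_derivative_diff has_vector_derivative_mult exp_scaleR_has_vector_derivative_0)
  then have "(\<lambda>n. real (Suc n) *\<^sub>R f (?t n)) \<longlonglongrightarrow> 0"
    using has_vector_derivative_0_LIMSEQ[of f 0] by (simp add: f_def)
  then have lim: "(\<lambda>n. exp (norm x + norm y) * norm (real (Suc n) *\<^sub>R f (?t n))) \<longlonglongrightarrow> 0"
    by (intro tendsto_mult_right_zero tendsto_norm_zero)
  have bound: "norm ((exp (?t n *\<^sub>R x) * exp (?t n *\<^sub>R y)) ^ Suc n - exp (x + y))
      \<le> exp (norm x + norm y) * norm (real (Suc n) *\<^sub>R f (?t n))" for n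
  proof -
    have "exp (x + y) = exp (?t n *\<^sub>R (x + y)) ^ Suc n"
      using exp_scaleR_of_nat[of "Suc n" "?t n *\<^sub>R (x + y)"] by simp
    then show ?thesis
      using norm_exp_product_power_diff_le[of "?t n" x y "Suc n"]
      by (simp del: power_Suc add: f_def mult_ac)
  qed
  have "(\<lambda>n. (exp (?t n *\<^sub>R x) * exp (?t n *\<^sub>R y)) ^ Suc n - exp (x + y)) \<longlonglongrightarrow> 0"
    by (rule Lim_null_comparison[OF always_eventually[OF allI[OF bound]] lim])
  then show ?thesis by (simp add: LIM_zero_iff)
qed

lemma exp_conjugation_LIMSEQ:
  fixes x y :: "'a::{banach,real_normed_algebra_1}"
  shows "(\<lambda>n. real (Suc n) *\<^sub>R
      (exp ((1 / real (Suc n)) *\<^sub>R x) * y * exp ((1 / real (Suc n)) *\<^sub>R (- x)) - y))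
    \<longlonglongrightarrow> x * y - y * x"
proof -
  define g where "g = (\<lambda>t::real. exp (t *\<^sub>R x) * y * exp (t *\<^sub>R (- x)))"
  have "(g has_vector_derivative (exp (0 *\<^sub>R x) * y * (- x) + x * y * exp (0 *\<^sub>R (- x)))) (at 0)"
    unfolding g_def
    by (intro has_vector_derivative_mult has_vector_derivative_mult_left
        exp_scaleR_has_vector_derivative_0)
  from has_vector_derivative_0_LIMSEQ[OF this[simplified]] show ?thesis
    by (simp add: g_def)
qed

lemma mexp_Lie_product_formula:
  "(\<lambda>n. mpow (mexp ((1 / real (Suc n)) *\<^sub>R X) ** mexp ((1 / real (Suc n)) *\<^sub>R Y)) (Suc n))
     \<longlonglongrightarrow> mexp (X + Y)"
  using bounded_linear.tendsto[OF bounded_linear_Rep_mat_alg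
      exp_Lie_product_formula[of "Abs_mat_alg X" "Abs_mat_alg Y"]]
  by (simp add: Rep_mat_alg_power times_mat_alg.rep_eq mexp_eq_Rep_exp Abs_mat_alg_simps)

lemma mexp_conjugation_LIMSEQ:
  "(\<lambda>n. real (Suc n) *\<^sub>R
      (mexp ((1 / real (Suc n)) *\<^sub>R X) ** Y ** mexp ((1 / real (Suc n)) *\<^sub>R (- X)) - Y))
     \<longlonglongrightarrow> comm X Y"
  using bounded_linear.tendsto[OF bounded_linear_Rep_mat_alg
      exp_conjugation_LIMSEQ[of "Abs_mat_alg X" "Abs_mat_alg Y"]]
  by (simp add: times_mat_alg.rep_eq minus_mat_alg.rep_eq scaleR_mat_alg.rep_eq mexp_eq_Rep_exp
      Abs_mat_alg_simps comm_def)

lemma Abs_mat_alg_comm: "Abs_mat_alg (comm X Y) = Abs_mat_alg X * Abs_mat_alg Y - Abs_mat_alg Y * Abs_mat_alg X"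
  by (simp add: comm_def Abs_mat_alg_simps)

lemma comm_add_left: "comm (X + Y) Z = comm X Z + comm Y Z"
  by (simp add: Abs_mat_alg_eq_iff[symmetric] Abs_mat_alg_comm Abs_mat_alg_simps algebra_simps)
lemma comm_add_right: "comm X (Y + Z) = comm X Y + comm X Z"
  by (simp add: Abs_mat_alg_eq_iff[symmetric] Abs_mat_alg_comm Abs_mat_alg_simps algebra_simps)
lemma comm_diff_right: "comm X (Y - Z) = comm X Y - comm X Z"
  by (simp add: Abs_mat_alg_eq_iff[symmetric] Abs_mat_alg_comm Abs_mat_alg_simps algebra_simps)
lemma comm_scaleR_left: "comm (r *\<^sub>R X) Y = r *\<^sub>R comm X Y"
  by (simp add: comm_def matrix_scaleR_mult_left matrix_scaleR_mult_right scaleR_diff_right)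
lemma comm_scaleR_right: "comm X (r *\<^sub>R Y) = r *\<^sub>R comm X Y"
  by (simp add: comm_def matrix_scaleR_mult_left matrix_scaleR_mult_right scaleR_diff_right)
lemma comm_minus_left: "comm (- X) Y = - comm X Y"
  using comm_scaleR_left[of "-1" X Y] by simp
lemma comm_zero_left [simp]: "comm 0 Y = 0"
  and comm_zero_right [simp]: "comm X 0 = 0"
  and comm_self [simp]: "comm X X = 0"
  by (simp_all add: comm_def)

lemma comm_Jacobi: "comm (comm Z X) W = comm Z (comm X W) - comm X (comm Z W)"
  by (simp add: Abs_mat_alg_eq_iff[symmetric] Abs_mat_alg_comm Abs_mat_alg_simps algebra_simps)

lemma continuous_on_comm:
  assumes "continuous_on S f" "continuous_on S g"
  shows "continuous_on S (\<lambda>v. comm (f v) (g v))"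
proof -
  have "continuous_on S (\<lambda>v. Abs_mat_alg (f v))" "continuous_on S (\<lambda>v. Abs_mat_alg (g v))"
    using assms bounded_linear.continuous_on[OF bounded_linear_Abs_mat_alg] by blast+
  then have "continuous_on S (\<lambda>v. Rep_mat_alg (Abs_mat_alg (comm (f v) (g v))))"
    unfolding Abs_mat_alg_comm
    by (intro bounded_linear.continuous_on[OF bounded_linear_Rep_mat_alg] continuous_intros)
  then show ?thesis by simp
qed

lemma conjugate_commutator:
  fixes a a' x y :: "'a::ring_1"
  assumes "a' * a = 1"
  shows "a * (x * y - y * x) * a' = a * x * a' * (a * y * a') - a * y * a' * (a * x * a')"
proof -
  have cancel: "a * u * a' * (a * v * a') = a * u * v * a'" for u v
  proof -
    have "a * u * a' * (a * v * a') = a * u * (a' * a) * v * a'" by (simp add: mult.assoc)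
    then show ?thesis using assms by simp
  qed
  show ?thesis unfolding cancel by (simp add: algebra_simps)
qed

lemma comm_conjugate:
  fixes m m' X Y :: "'n::finite cmat"
  assumes "m' ** m = mat 1"
  shows "m ** comm X Y ** m' = comm (m ** X ** m') (m ** Y ** m')"
proof -
  have "Abs_mat_alg m' * Abs_mat_alg m = 1"
    using assms by (simp flip: Abs_mat_alg_mult Abs_mat_alg_one)
  from conjugate_commutator[OF this, of "Abs_mat_alg X" "Abs_mat_alg Y"] show ?thesis
    by (simp only: Abs_mat_alg_eq_iff[symmetric] Abs_mat_alg_comm Abs_mat_alg_mult)
qed

lemma linear_conjugate: "linear (\<lambda>Y. (m::'n::finite cmat) ** Y ** (m'::'n cmat))"
proof (rule linearI)
  show "m ** (x + y) ** m' = m ** x ** m' + m ** y ** m'" for x y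
    by (rule Abs_mat_alg_eq_iff[THEN iffD1]) (simp add: Abs_mat_alg_simps algebra_simps)
  show "m ** (c *\<^sub>R x) ** m' = c *\<^sub>R (m ** x ** m')" for c x
    by (simp add: matrix_scaleR_mult_left matrix_scaleR_mult_right)
qed

section \<open>The Lie algebra of a closed matrix group\<close>

lemma matrix_inv_unique:
  fixes A B :: "'n::finite cmat"
  assumes AB: "A ** B = mat 1" "B ** A = mat 1"
  shows "matrix_inv A = B"
proof -
  have "A ** matrix_inv A = mat 1 \<and> matrix_inv A ** A = mat 1"
    unfolding matrix_inv_def by (rule someI[of _ B]) (use AB in blast)
  then have inv: "matrix_inv A ** A = mat 1" by blast
  have "matrix_inv A = matrix_inv A ** (A ** B)" using AB by simp
  also have "\<dots> = matrix_inv A ** A ** B" by (simp only: matrix_mul_assoc)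
  finally show ?thesis using inv by simp
qed

lemma matrix_inv_mult:
  fixes A :: "'n::finite cmat"
  assumes "invertible A"
  shows "A ** matrix_inv A = mat 1" "matrix_inv A ** A = mat 1"
proof -
  have "A ** matrix_inv A = mat 1 \<and> matrix_inv A ** A = mat 1"
    unfolding matrix_inv_def by (rule someI_ex) (use assms in \<open>simp add: invertible_def\<close>)
  then show "A ** matrix_inv A = mat 1" "matrix_inv A ** A = mat 1" by auto
qed

lemma closed_matrix_group_mpow:
  assumes "closed_matrix_group G" "P \<in> G"
  shows "mpow P k \<in> G"
  using assms by (induction k) (auto simp: closed_matrix_group_def)

lemma closed_matrix_group_inverse:
  assumes "closed_matrix_group G" "a \<in> G"
  shows "matrix_inv a \<in> G" "a ** matrix_inv a = mat 1" "matrix_inv a ** a = mat 1"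
  using assms matrix_inv_mult by (auto simp: closed_matrix_group_def)

lemma lie_alg_scaleR: "X \<in> lie_alg G \<Longrightarrow> c *\<^sub>R X \<in> lie_alg G"
  by (simp add: lie_alg_def)

lemma lie_alg_add:
  assumes G: "closed_matrix_group G" and X: "X \<in> lie_alg G" and Y: "Y \<in> lie_alg G"
  shows "X + Y \<in> lie_alg G"
  unfolding lie_alg_def
proof (intro CollectI allI)
  fix t :: real
  have "closed G" using G by (simp add: closed_matrix_group_def)
  have "mexp (t *\<^sub>R X + t *\<^sub>R Y) \<in> G"
  proof (rule closed_sequentially[OF \<open>closed G\<close> _ mexp_Lie_product_formula])
    fix n
    let ?s = "1 / real (Suc n)"
    have "mexp (?s *\<^sub>R t *\<^sub>R X) \<in> G" "mexp (?s *\<^sub>R t *\<^sub>R Y) \<in> G"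
      using X Y by (simp_all add: lie_alg_def)
    then have "mexp (?s *\<^sub>R t *\<^sub>R X) ** mexp (?s *\<^sub>R t *\<^sub>R Y) \<in> G"
      using G by (simp add: closed_matrix_group_def)
    then show "mpow (mexp (?s *\<^sub>R t *\<^sub>R X) ** mexp (?s *\<^sub>R t *\<^sub>R Y)) (Suc n) \<in> G"
      by (rule closed_matrix_group_mpow[OF G])
  qed
  then show "mexp (t *\<^sub>R (X + Y)) \<in> G" by (simp add: scaleR_right_distrib)
qed

lemma subspace_lie_alg:
  assumes "closed_matrix_group G"
  shows "subspace (lie_alg G)"
proof -
  have "0 \<in> lie_alg G" using assms by (simp add: lie_alg_def mexp_zero closed_matrix_group_def)
  then show ?thesis using lie_alg_add[OF assms] lie_alg_scaleR unfolding subspace_def by blast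
qed

lemma lie_alg_conjugate:
  assumes G: "closed_matrix_group G" and g: "g \<in> G" "g' \<in> G" "g ** g' = mat 1" "g' ** g = mat 1"
    and X: "X \<in> lie_alg G"
  shows "g ** X ** g' \<in> lie_alg G"
  unfolding lie_alg_def
proof (intro CollectI allI)
  fix t :: real
  have "t *\<^sub>R (g ** X ** g') = g ** (t *\<^sub>R X) ** g'"
    by (simp add: matrix_scaleR_mult_left matrix_scaleR_mult_right)
  then have "mexp (t *\<^sub>R (g ** X ** g')) = g ** mexp (t *\<^sub>R X) ** g'"
    using mexp_conjugate[OF g(3,4)] by simp
  moreover have "mexp (t *\<^sub>R X) \<in> G" using X by (simp add: lie_alg_def)
  ultimately show "mexp (t *\<^sub>R (g ** X ** g')) \<in> G"
    using G g by (simp add: closed_matrix_group_def)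
qed

lemma lie_alg_comm:
  assumes G: "closed_matrix_group G" and X: "X \<in> lie_alg G" and Y: "Y \<in> lie_alg G"
  shows "comm X Y \<in> lie_alg G"
proof (rule closed_sequentially[OF closed_subspace[OF subspace_lie_alg[OF G]] _ mexp_conjugation_LIMSEQ])
  fix n
  let ?s = "1 / real (Suc n)"
  have "?s *\<^sub>R (- X) = (- ?s) *\<^sub>R X" by simp
  then have g: "mexp (?s *\<^sub>R X) \<in> G" "mexp (?s *\<^sub>R (- X)) \<in> G"
    using X unfolding lie_alg_def by (simp_all only: mem_Collect_eq)
  have "mexp (?s *\<^sub>R X) ** mexp (?s *\<^sub>R (- X)) = mat 1" "mexp (?s *\<^sub>R (- X)) ** mexp (?s *\<^sub>R X) = mat 1"
    using mexp_minus_inverse[of "?s *\<^sub>R X"] by simp_all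
  from lie_alg_conjugate[OF G g this Y]
  have "mexp (?s *\<^sub>R X) ** Y ** mexp (?s *\<^sub>R (- X)) \<in> lie_alg G" .
  then show "real (Suc n) *\<^sub>R (mexp (?s *\<^sub>R X) ** Y ** mexp (?s *\<^sub>R (- X)) - Y) \<in> lie_alg G"
    using subspace_lie_alg[OF G] Y by (simp add: subspace_diff subspace_scale)
qed

lemma group_hom_on_one:
  assumes G: "closed_matrix_group G" and f: "group_hom_on G f"
  shows "f (mat 1) = mat 1"
proof -
  define u where "u = f (mat 1)"
  have "mat 1 \<in> G" using G by (simp add: closed_matrix_group_def)
  then have "u \<in> G" "u ** u = u"
    using f by (auto simp: group_hom_on_def u_def)
  note inv = closed_matrix_group_inverse[OF G \<open>u \<in> G\<close>]
  have "u = matrix_inv u ** u ** u" using inv by simp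
  also have "\<dots> = matrix_inv u ** (u ** u)" by (simp only: matrix_mul_assoc)
  also have "\<dots> = mat 1" using inv \<open>u ** u = u\<close> by simp
  finally show ?thesis by (simp add: u_def)
qed

lemma group_hom_on_inverse:
  assumes G: "closed_matrix_group G" and f: "group_hom_on G f" and a: "a \<in> G"
  shows "f (matrix_inv a) = matrix_inv (f a)"
proof (rule matrix_inv_unique[symmetric])
  note inv = closed_matrix_group_inverse[OF G a]
  have "f a ** f (matrix_inv a) = f (a ** matrix_inv a)" "f (matrix_inv a) ** f a = f (matrix_inv a ** a)"
    using f a inv(1) by (simp_all add: group_hom_on_def)
  then show "f a ** f (matrix_inv a) = mat 1" "f (matrix_inv a) ** f a = mat 1"
    using inv group_hom_on_one[OF G f] by simp_all
qed

lemma closed_matrix_group_fixed_points: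
  assumes G: "closed_matrix_group G" and f: "group_hom_on G f"
  shows "closed_matrix_group (fixed_points G f)"
proof -
  have "closed {x \<in> G. f x - x = 0}"
    using f G by (intro continuous_closed_preimage_constant continuous_intros)
      (auto simp: group_hom_on_def closed_matrix_group_def)
  then show ?thesis
    using G group_hom_on_one[OF G f] group_hom_on_inverse[OF G f] f
    by (auto simp: closed_matrix_group_def fixed_points_def group_hom_on_def)
qed

section \<open>The inner product of a Cartan involution\<close>

locale cartan_algebra =
  fixes g0 :: "'n::finite cmat set" and \<theta> :: "'n cmat \<Rightarrow> 'n cmat"
  assumes lie_subalg: "lie_subalg g0"
    and cartan: "cartan_involution_alg g0 \<theta>"
begin

lemma subspace_g0: "subspace g0"
  and comm_in: "X \<in> g0 \<Longrightarrow> Y \<in> g0 \<Longrightarrow> comm X Y \<in> g0"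
  using lie_subalg by (auto simp: lie_subalg_def)

lemma theta_in: "X \<in> g0 \<Longrightarrow> \<theta> X \<in> g0"
  and theta_theta: "X \<in> g0 \<Longrightarrow> \<theta> (\<theta> X) = X"
  and theta_add: "X \<in> g0 \<Longrightarrow> Y \<in> g0 \<Longrightarrow> \<theta> (X + Y) = \<theta> X + \<theta> Y"
  and theta_comm: "X \<in> g0 \<Longrightarrow> Y \<in> g0 \<Longrightarrow> \<theta> (comm X Y) = comm (\<theta> X) (\<theta> Y)"
  and theta_scaleR: "X \<in> g0 \<Longrightarrow> \<theta> (r *\<^sub>R X) = r *\<^sub>R \<theta> X"
  and killing_theta_pos: "X \<in> g0 \<Longrightarrow> X \<noteq> 0 \<Longrightarrow> - killing g0 X (\<theta> X) > 0"
  using cartan unfolding cartan_involution_alg_def by blast+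

lemma g0_add: "X \<in> g0 \<Longrightarrow> Y \<in> g0 \<Longrightarrow> X + Y \<in> g0"
  and g0_diff: "X \<in> g0 \<Longrightarrow> Y \<in> g0 \<Longrightarrow> X - Y \<in> g0"
  and g0_scaleR: "X \<in> g0 \<Longrightarrow> r *\<^sub>R X \<in> g0"
  and g0_zero: "0 \<in> g0"
  using subspace_g0 by (simp_all add: subspace_add subspace_diff subspace_scale subspace_0)

lemma theta_minus: "X \<in> g0 \<Longrightarrow> \<theta> (- X) = - \<theta> X"
  using theta_scaleR[of X "-1"] by simp
lemma theta_diff: "X \<in> g0 \<Longrightarrow> Y \<in> g0 \<Longrightarrow> \<theta> (X - Y) = \<theta> X - \<theta> Y"
  using theta_add[of X "- Y"] theta_minus[of Y] g0_scaleR[of Y "-1"] by simp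
lemma theta_zero: "\<theta> 0 = 0"
  using theta_scaleR[OF g0_zero, of 0] by simp

text \<open>The same choice of basis as in the definition of \<open>killing\<close>, so that the Killing form
  is literally a trace.\<close>

definition basis_g0 :: "'n cmat set" where
  "basis_g0 = (SOME B. B \<subseteq> g0 \<and> independent B \<and> g0 \<subseteq> span B)"

lemma basis_g0: "basis_g0 \<subseteq> g0" "independent basis_g0" "span basis_g0 = g0"
proof -
  have "\<exists>B. B \<subseteq> g0 \<and> independent B \<and> g0 \<subseteq> span B"
    by (meson basis_exists)
  then have "basis_g0 \<subseteq> g0 \<and> independent basis_g0 \<and> g0 \<subseteq> span basis_g0"
    unfolding basis_g0_def by (rule someI_ex)
  then show "basis_g0 \<subseteq> g0" "independent basis_g0" "span basis_g0 = g0"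
    using span_subspace subspace_g0 by auto
qed

lemma finite_basis_g0: "finite basis_g0"
  using finiteI_independent[OF basis_g0(2)] .

definition trace_g0 :: "('n cmat \<Rightarrow> 'n cmat) \<Rightarrow> real" where
  "trace_g0 F = (\<Sum>b\<in>basis_g0. representation basis_g0 (F b) b)"

lemma killing_eq_trace: "killing g0 X Y = trace_g0 (\<lambda>b. comm X (comm Y b))"
  by (simp add: killing_def Let_def trace_g0_def basis_g0_def)

definition endo_g0 :: "('n cmat \<Rightarrow> 'n cmat) \<Rightarrow> bool" where
  "endo_g0 F \<longleftrightarrow> (\<forall>x\<in>g0. F x \<in> g0) \<and> (\<forall>x\<in>g0. \<forall>y\<in>g0. F (x + y) = F x + F y)
     \<and> (\<forall>x\<in>g0. \<forall>r. F (r *\<^sub>R x) = r *\<^sub>R F x)"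

lemma endo_g0_comm: "X \<in> g0 \<Longrightarrow> endo_g0 (comm X)"
  by (simp add: endo_g0_def comm_in comm_add_right comm_scaleR_right)

lemma endo_g0_comp: "endo_g0 F \<Longrightarrow> endo_g0 G \<Longrightarrow> endo_g0 (\<lambda>b. F (G b))"
  by (simp add: endo_g0_def)

lemma endo_g0_theta: "endo_g0 \<theta>"
  by (simp add: endo_g0_def theta_in theta_add theta_scaleR)

lemma endo_g0_in: "endo_g0 F \<Longrightarrow> x \<in> g0 \<Longrightarrow> F x \<in> g0"
  and endo_g0_add: "endo_g0 F \<Longrightarrow> x \<in> g0 \<Longrightarrow> y \<in> g0 \<Longrightarrow> F (x + y) = F x + F y"
  and endo_g0_scaleR: "endo_g0 F \<Longrightarrow> x \<in> g0 \<Longrightarrow> F (r *\<^sub>R x) = r *\<^sub>R F x"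
  by (simp_all add: endo_g0_def)

lemma endo_g0_sum:
  assumes F: "endo_g0 F" and "finite I" and "\<And>i. i \<in> I \<Longrightarrow> w i \<in> g0"
  shows "F (\<Sum>i\<in>I. w i) = (\<Sum>i\<in>I. F (w i))"
  using assms(2,3)
proof (induction I rule: finite_induct)
  case empty
  show ?case using endo_g0_scaleR[OF F g0_zero, of 0] by simp
next
  case (insert x I)
  then show ?case by (simp add: endo_g0_add[OF F] subspace_sum[OF subspace_g0])
qed

lemma endo_g0_expand:
  assumes F: "endo_g0 F" and v: "v \<in> g0"
  shows "F v = (\<Sum>c\<in>basis_g0. representation basis_g0 v c *\<^sub>R F c)"
proof -
  have "v = (\<Sum>c\<in>basis_g0. representation basis_g0 v c *\<^sub>R c)"
    using sum_representation_eq[OF basis_g0(2) _ finite_basis_g0] v basis_g0(3) by simp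
  then have "F v = F (\<Sum>c\<in>basis_g0. representation basis_g0 v c *\<^sub>R c)" by simp
  also have "\<dots> = (\<Sum>c\<in>basis_g0. F (representation basis_g0 v c *\<^sub>R c))"
    using basis_g0(1) by (intro endo_g0_sum[OF F finite_basis_g0] g0_scaleR) blast
  also have "\<dots> = (\<Sum>c\<in>basis_g0. representation basis_g0 v c *\<^sub>R F c)"
    using basis_g0(1) by (intro sum.cong refl endo_g0_scaleR[OF F]) blast
  finally show ?thesis .
qed

lemma representation_endo_g0:
  assumes F: "endo_g0 F" and v: "v \<in> g0"
  shows "representation basis_g0 (F v) b
    = (\<Sum>c\<in>basis_g0. representation basis_g0 v c * representation basis_g0 (F c) b)"
proof -
  have Fc: "F c \<in> span basis_g0" if "c \<in> basis_g0" for c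
    using that endo_g0_in[OF F] basis_g0 by blast
  have "representation basis_g0 (F v) b
      = (\<Sum>c\<in>basis_g0. representation basis_g0 (representation basis_g0 v c *\<^sub>R F c) b)"
    using representation_sum[OF basis_g0(2), of basis_g0 "\<lambda>c. representation basis_g0 v c *\<^sub>R F c"] Fc
    by (simp add: endo_g0_expand[OF assms] span_scale)
  also have "\<dots> = (\<Sum>c\<in>basis_g0. representation basis_g0 v c * representation basis_g0 (F c) b)"
    using Fc by (intro sum.cong refl) (simp add: representation_scale[OF basis_g0(2)])
  finally show ?thesis .
qed

lemma trace_g0_comp_commute:
  assumes F: "endo_g0 F" and G: "endo_g0 G"
  shows "trace_g0 (\<lambda>b. F (G b)) = trace_g0 (\<lambda>b. G (F b))"
proof -
  let ?r = "representation basis_g0"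
  have FG: "F b \<in> g0" "G b \<in> g0" if "b \<in> basis_g0" for b
    using that endo_g0_in[OF F] endo_g0_in[OF G] basis_g0(1) by blast+
  have "trace_g0 (\<lambda>b. F (G b)) = (\<Sum>b\<in>basis_g0. \<Sum>c\<in>basis_g0. ?r (G b) c * ?r (F c) b)"
    unfolding trace_g0_def using FG by (intro sum.cong refl representation_endo_g0[OF F])
  also have "\<dots> = (\<Sum>c\<in>basis_g0. \<Sum>b\<in>basis_g0. ?r (F c) b * ?r (G b) c)"
    by (subst sum.swap) (simp add: mult.commute)
  also have "\<dots> = trace_g0 (\<lambda>b. G (F b))"
    unfolding trace_g0_def using FG by (intro sum.cong refl representation_endo_g0[OF G, symmetric])
  finally show ?thesis .
qed

lemma trace_g0_cong: "(\<And>b. b \<in> g0 \<Longrightarrow> F b = G b) \<Longrightarrow> trace_g0 F = trace_g0 G"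
  unfolding trace_g0_def using basis_g0(1) by (intro sum.cong refl) auto

lemma trace_g0_add:
  "(\<And>b. b \<in> g0 \<Longrightarrow> F b \<in> g0) \<Longrightarrow> (\<And>b. b \<in> g0 \<Longrightarrow> G b \<in> g0) \<Longrightarrow>
    trace_g0 (\<lambda>b. F b + G b) = trace_g0 F + trace_g0 G"
  unfolding trace_g0_def using basis_g0
  by (simp add: representation_add subset_eq sum.distrib)

lemma trace_g0_diff:
  "(\<And>b. b \<in> g0 \<Longrightarrow> F b \<in> g0) \<Longrightarrow> (\<And>b. b \<in> g0 \<Longrightarrow> G b \<in> g0) \<Longrightarrow>
    trace_g0 (\<lambda>b. F b - G b) = trace_g0 F - trace_g0 G"
  unfolding trace_g0_def using basis_g0
  by (simp add: representation_diff subset_eq sum_subtractf)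

lemma trace_g0_scaleR:
  "(\<And>b. b \<in> g0 \<Longrightarrow> F b \<in> g0) \<Longrightarrow> trace_g0 (\<lambda>b. r *\<^sub>R F b) = r * trace_g0 F"
  unfolding trace_g0_def using basis_g0
  by (simp add: representation_scale subset_eq sum_distrib_left)

lemma killing_sym: "X \<in> g0 \<Longrightarrow> Y \<in> g0 \<Longrightarrow> killing g0 X Y = killing g0 Y X"
  unfolding killing_eq_trace by (rule trace_g0_comp_commute[OF endo_g0_comm endo_g0_comm])

lemma killing_add_left:
  "X \<in> g0 \<Longrightarrow> X' \<in> g0 \<Longrightarrow> Y \<in> g0 \<Longrightarrow> killing g0 (X + X') Y = killing g0 X Y + killing g0 X' Y"
  unfolding killing_eq_trace comm_add_left by (rule trace_g0_add) (simp_all add: comm_in)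

lemma killing_scaleR_left:
  "X \<in> g0 \<Longrightarrow> Y \<in> g0 \<Longrightarrow> killing g0 (r *\<^sub>R X) Y = r * killing g0 X Y"
  unfolding killing_eq_trace comm_scaleR_left by (rule trace_g0_scaleR) (simp add: comm_in)

lemma killing_scaleR_right:
  "X \<in> g0 \<Longrightarrow> Y \<in> g0 \<Longrightarrow> killing g0 X (r *\<^sub>R Y) = r * killing g0 X Y"
  using killing_scaleR_left[of Y X r] killing_sym g0_scaleR by simp

text \<open>Invariance of the Killing form: the trace of \<open>[ad Z, ad X ad Y]\<close> vanishes.\<close>

lemma killing_comm_left:
  assumes X: "X \<in> g0" and Y: "Y \<in> g0" and Z: "Z \<in> g0"
  shows "killing g0 (comm Z X) Y = - killing g0 X (comm Z Y)"
proof -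
  have in_g0: "comm X (comm Y b) \<in> g0" "comm Z (comm Y b) \<in> g0" "comm Y (comm Z b) \<in> g0"
    "comm Z (comm X (comm Y b)) \<in> g0" "comm X (comm Z (comm Y b)) \<in> g0" "comm X (comm Y (comm Z b)) \<in> g0"
    if "b \<in> g0" for b
    using that X Y Z by (simp_all add: comm_in)
  have "killing g0 (comm Z X) Y
      = trace_g0 (\<lambda>b. comm Z (comm X (comm Y b))) - trace_g0 (\<lambda>b. comm X (comm Z (comm Y b)))"
    unfolding killing_eq_trace comm_Jacobi by (rule trace_g0_diff) (simp_all add: in_g0)
  moreover have "killing g0 X (comm Z Y)
      = trace_g0 (\<lambda>b. comm X (comm Z (comm Y b))) - trace_g0 (\<lambda>b. comm X (comm Y (comm Z b)))"
    unfolding killing_eq_trace comm_Jacobi comm_diff_right by (rule trace_g0_diff) (simp_all add: in_g0)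
  moreover have "trace_g0 (\<lambda>b. comm Z (comm X (comm Y b))) = trace_g0 (\<lambda>b. comm X (comm Y (comm Z b)))"
    using trace_g0_comp_commute[OF endo_g0_comm[OF Z] endo_g0_comp[OF endo_g0_comm[OF X] endo_g0_comm[OF Y]]] .
  ultimately show ?thesis by simp
qed

lemma killing_theta:
  assumes X: "X \<in> g0" and Y: "Y \<in> g0"
  shows "killing g0 (\<theta> X) (\<theta> Y) = killing g0 X Y"
proof -
  have "killing g0 (\<theta> X) (\<theta> Y) = trace_g0 (\<lambda>b. \<theta> (comm X (comm Y (\<theta> b))))"
    unfolding killing_eq_trace
  proof (rule trace_g0_cong)
    fix b assume b: "b \<in> g0"
    then show "comm (\<theta> X) (comm (\<theta> Y) b) = \<theta> (comm X (comm Y (\<theta> b)))"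
      using X Y by (simp add: theta_comm theta_in theta_theta comm_in)
  qed
  also have "\<dots> = trace_g0 (\<lambda>b. comm X (comm Y (\<theta> (\<theta> b))))"
    by (rule trace_g0_comp_commute[OF endo_g0_theta
          endo_g0_comp[OF endo_g0_comm[OF X] endo_g0_comp[OF endo_g0_comm[OF Y] endo_g0_theta]]])
  also have "\<dots> = killing g0 X Y"
    unfolding killing_eq_trace by (rule trace_g0_cong) (simp add: theta_theta)
  finally show ?thesis .
qed

definition B_theta :: "'n cmat \<Rightarrow> 'n cmat \<Rightarrow> real" where
  "B_theta X Y = - killing g0 X (\<theta> Y)"

lemma B_theta_sym: "X \<in> g0 \<Longrightarrow> Y \<in> g0 \<Longrightarrow> B_theta X Y = B_theta Y X"
  unfolding B_theta_def
  using killing_theta[of X "\<theta> Y"] killing_sym[of "\<theta> X" Y] by (simp add: theta_in theta_theta)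

lemma B_theta_add_left:
  "X \<in> g0 \<Longrightarrow> X' \<in> g0 \<Longrightarrow> Y \<in> g0 \<Longrightarrow> B_theta (X + X') Y = B_theta X Y + B_theta X' Y"
  unfolding B_theta_def using killing_add_left theta_in by simp
lemma B_theta_scaleR_left: "X \<in> g0 \<Longrightarrow> Y \<in> g0 \<Longrightarrow> B_theta (r *\<^sub>R X) Y = r * B_theta X Y"
  unfolding B_theta_def using killing_scaleR_left theta_in by simp
lemma B_theta_add_right:
  "X \<in> g0 \<Longrightarrow> Y \<in> g0 \<Longrightarrow> Y' \<in> g0 \<Longrightarrow> B_theta X (Y + Y') = B_theta X Y + B_theta X Y'"
  using B_theta_add_left[of Y Y' X] B_theta_sym g0_add by simp
lemma B_theta_scaleR_right: "X \<in> g0 \<Longrightarrow> Y \<in> g0 \<Longrightarrow> B_theta X (r *\<^sub>R Y) = r * B_theta X Y"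
  using B_theta_scaleR_left[of Y X r] B_theta_sym g0_scaleR by simp
lemma B_theta_diff_left:
  "X \<in> g0 \<Longrightarrow> X' \<in> g0 \<Longrightarrow> Y \<in> g0 \<Longrightarrow> B_theta (X - X') Y = B_theta X Y - B_theta X' Y"
  using B_theta_add_left[of X "- X'" Y] B_theta_scaleR_left[of X' Y "-1"] g0_scaleR[of X' "-1"] by simp
lemma B_theta_diff_right:
  "X \<in> g0 \<Longrightarrow> Y \<in> g0 \<Longrightarrow> Y' \<in> g0 \<Longrightarrow> B_theta X (Y - Y') = B_theta X Y - B_theta X Y'"
  using B_theta_diff_left[of Y Y' X] B_theta_sym g0_diff by simp
lemma B_theta_zero_right: "Y \<in> g0 \<Longrightarrow> B_theta Y 0 = 0"
  using B_theta_scaleR_right[OF _ g0_zero, of Y 0] by simp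

lemma B_theta_zero_left [simp]: "B_theta 0 Y = 0"
  by (simp add: B_theta_def killing_eq_trace trace_g0_def representation_zero)

lemma B_theta_pos: "X \<in> g0 \<Longrightarrow> X \<noteq> 0 \<Longrightarrow> B_theta X X > 0"
  unfolding B_theta_def using killing_theta_pos by simp
lemma B_theta_eq_0_iff: "X \<in> g0 \<Longrightarrow> B_theta X X = 0 \<longleftrightarrow> X = 0"
  using B_theta_pos[of X] by (cases "X = 0") auto

lemmas B_theta_bilinear = B_theta_add_left B_theta_add_right B_theta_scaleR_left B_theta_scaleR_right
  B_theta_diff_left B_theta_diff_right

lemma B_theta_comm_self_adjoint:
  assumes H: "H \<in> g0" "\<theta> H = - H" and X: "X \<in> g0" and Y: "Y \<in> g0"
  shows "B_theta (comm H X) Y = B_theta X (comm H Y)"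
proof -
  have "comm H (\<theta> Y) = - \<theta> (comm H Y)"
    using theta_comm[OF H(1) Y] H(2) by (simp add: comm_minus_left)
  then show ?thesis
    unfolding B_theta_def
    using killing_comm_left[OF X theta_in[OF Y] H(1)] killing_scaleR_right[of X _ "-1"] X Y H
    by (simp add: comm_in theta_in)
qed

lemma B_theta_orthogonal_spans:
  assumes S: "S \<subseteq> g0" and T: "T \<subseteq> g0" and orth: "\<And>y z. y \<in> S \<Longrightarrow> z \<in> T \<Longrightarrow> B_theta y z = 0"
    and y: "y \<in> span S" and z: "z \<in> span T"
  shows "B_theta y z = 0"
proof -
  have span_g0: "span U \<subseteq> g0" if "U \<subseteq> g0" for U
    using that span_minimal subspace_g0 by blast
  have "subspace {z \<in> g0. B_theta y' z = 0}" if "y' \<in> g0" for y'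
    unfolding subspace_def using that by (auto simp: g0_zero g0_add g0_scaleR B_theta_zero_right B_theta_bilinear)
  then have "span T \<subseteq> {z \<in> g0. B_theta y' z = 0}" if "y' \<in> S" for y'
    using that S T orth by (intro span_minimal) auto
  moreover have "subspace {y \<in> g0. B_theta y z = 0}"
    unfolding subspace_def using z span_g0[OF T]
    by (auto simp: g0_zero g0_add g0_scaleR B_theta_bilinear B_theta_sym[OF g0_zero] B_theta_zero_right)
  ultimately have "span S \<subseteq> {y \<in> g0. B_theta y z = 0}"
    using S z by (intro span_minimal) auto
  then show ?thesis using y by blast
qed

end

section \<open>Simultaneous diagonalisation of \<open>ad a0\<close>\<close>

lemma span_disjoint_subsets_Int:
  fixes C :: "'a::euclidean_space set"
  assumes C: "independent C" and B: "B \<subseteq> C" and D: "D \<subseteq> C" and BD: "B \<inter> D = {}"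
    and x: "x \<in> span B" "x \<in> span D"
  shows "x = 0"
proof -
  have rB: "representation C x = representation B x" and rD: "representation C x = representation D x"
    using representation_extend[OF C x(1) B] representation_extend[OF C x(2) D] by simp_all
  have "representation C x b = 0" for b
  proof (cases "b \<in> B")
    case True
    then have "b \<notin> D" using BD by blast
    then show ?thesis unfolding rD using representation_ne_zero by blast
  next
    case False
    then show ?thesis unfolding rB using representation_ne_zero by blast
  qed
  moreover have "x \<in> span C" using x(1) B span_mono by blast
  then have "x = (\<Sum>b\<in>C. representation C x b *\<^sub>R b)"
    using sum_representation_eq[OF C _ finiteI_independent[OF C]] by simp
  ultimately show ?thesis by simp
qed

lemma linear_image_eq_span_image_Diff:
  assumes f: "linear f" and V: "subspace V" and C: "C \<subseteq> V" "V \<subseteq> span C"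
    and B: "\<And>b. b \<in> B \<Longrightarrow> f b = 0"
  shows "f ` V = span (f ` (C - B))"
proof
  have "f c \<in> span (f ` (C - B))" if "c \<in> C" for c
    using that B span_zero span_base[of "f c"] by (cases "c \<in> B") auto
  then have "span (f ` C) \<subseteq> span (f ` (C - B))"
    by (intro span_minimal[OF _ subspace_span]) blast
  then show "f ` V \<subseteq> span (f ` (C - B))"
    using C(2) linear_span_image[OF f, of C] by blast
  show "span (f ` (C - B)) \<subseteq> f ` V"
    using C(1) by (intro span_minimal linear_subspace_image[OF f V]) blast
qed

lemma dim_kernel_add_dim_image:
  fixes f :: "'a::euclidean_space \<Rightarrow> 'b::euclidean_space"
  assumes f: "linear f" and V: "subspace V"
  shows "dim {v\<in>V. f v = 0} + dim (f ` V) = dim V"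
proof -
  define K where "K = {v\<in>V. f v = 0}"
  obtain B where B: "B \<subseteq> K" "independent B" "K \<subseteq> span B" "card B = dim K"
    by (rule basis_exists)
  have "B \<subseteq> V" using B(1) by (auto simp: K_def)
  then obtain C where C: "B \<subseteq> C" "C \<subseteq> V" "independent C" "V \<subseteq> span C"
    using maximal_independent_subset_extend[OF _ B(2)] by blast
  define D where "D = C - B"
  have DC: "D \<subseteq> C" by (auto simp: D_def)
  then have iD: "independent D" using C(3) independent_mono by blast
  have "f ` V = span (f ` D)"
    unfolding D_def using B(1) by (intro linear_image_eq_span_image_Diff[OF f V C(2,4)]) (auto simp: K_def)
  moreover have "inj_on f (span D)"
  proof (rule linear_inj_on_iff_eq_0[OF f subspace_span, THEN iffD2], intro ballI impI)
    fix x assume x: "x \<in> span D" "f x = 0"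
    have "span D \<subseteq> V" using DC C(2) V span_minimal by blast
    then have "x \<in> span B" using x B(3) by (auto simp: K_def)
    then show "x = 0"
      using span_disjoint_subsets_Int[OF C(3) C(1) DC _ _ x(1)] by (auto simp: D_def)
  qed
  ultimately have "dim (f ` V) = card D"
    using dim_image_eq[OF f] dim_eq_card_independent[OF iD] by simp
  moreover have "card C = card B + card D"
    unfolding D_def using C(1) finiteI_independent[OF C(3)]
    by (metis card_Diff_subset card_mono finite_subset le_add_diff_inverse)
  moreover have "dim V = card C" using basis_card_eq_dim[OF C(2) C(4) C(3)] by simp
  ultimately show ?thesis using B(4) by (simp add: K_def)
qed

lemma quadratic_nonneg_imp_linear_coeff_eq_0:
  fixes a b :: real
  assumes b: "b \<ge> 0" and q: "\<And>t. 0 \<le> 2 * t * a + t^2 * b"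
  shows "a = 0"
proof (rule ccontr)
  assume a: "a \<noteq> 0"
  define t where "t = - a / (b + 1)"
  have b1: "b + 1 > 0" using b by simp
  have "0 \<le> (2 * t * a + t^2 * b) * (b + 1)^2" using q[of t] b1 by simp
  also have "(2 * t * a + t^2 * b) * (b + 1)^2 = 2 * a * (t * (b + 1)) * (b + 1) + (t * (b + 1))^2 * b"
    by (simp add: algebra_simps power2_eq_square)
  also have "t * (b + 1) = - a" unfolding t_def using b1 by simp
  also have "2 * a * (- a) * (b + 1) + (- a)^2 * b = a^2 * (- b - 2)"
    by (simp add: algebra_simps power2_eq_square)
  finally have "0 \<le> a^2 * (- b - 2)" .
  moreover have "a^2 > 0" using a by simp
  ultimately show False using b by (simp add: zero_le_mult_iff)
qed

context cartan_algebra
begin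

text \<open>\<open>B_theta\<close> is only meaningful on \<open>g0\<close>; to see that it is continuous there, extend a basis
  of \<open>g0\<close> to one of the whole matrix space, so that the coordinate functionals and an extension
  of \<open>\<theta>\<close> become linear maps on all matrices.\<close>

lemma continuous_on_B_theta:
  assumes f: "continuous_on S f" "f ` S \<subseteq> g0" and g: "continuous_on S g" "g ` S \<subseteq> g0"
  shows "continuous_on S (\<lambda>v. B_theta (f v) (g v))"
proof -
  obtain C where C: "basis_g0 \<subseteq> C" "independent C" "span C = UNIV"
    using maximal_independent_subset_extend[OF subset_UNIV basis_g0(2)] by (metis top.extremum_uniqueI)
  have rep: "representation basis_g0 v = representation C v" if "v \<in> g0" for v
    using representation_extend[OF C(2) _ C(1)] that basis_g0(3) by simp
  have cont_rep: "continuous_on S (\<lambda>v. representation C (h v) b)" if "continuous_on S h" for h b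
    using bounded_linear.continuous_on[OF bounded_linear_representation[OF C(2,3)] that] .
  define \<theta>' where "\<theta>' v = (\<Sum>c\<in>basis_g0. representation C v c *\<^sub>R \<theta> c)" for v
  have "B_theta X Y = - (\<Sum>b\<in>basis_g0. representation C (comm X (comm (\<theta> Y) b)) b)"
    if "X \<in> g0" "Y \<in> g0" for X Y
    using that basis_g0(1)
    by (auto simp: B_theta_def killing_eq_trace trace_g0_def rep comm_in theta_in intro!: sum.cong)
  moreover have "\<theta> v = \<theta>' v" if "v \<in> g0" for v
    using endo_g0_expand[OF endo_g0_theta that] rep[OF that] by (simp add: \<theta>'_def)
  ultimately have eq: "B_theta (f v) (g v)
      = - (\<Sum>b\<in>basis_g0. representation C (comm (f v) (comm (\<theta>' (g v)) b)) b)"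
    if "v \<in> S" for v
    using that f(2) g(2) by (simp add: image_subset_iff)
  have "continuous_on S (\<lambda>v. - (\<Sum>b\<in>basis_g0. representation C (comm (f v) (comm (\<theta>' (g v)) b)) b))"
    unfolding \<theta>'_def
    by (intro continuous_intros cont_rep continuous_on_comm f g continuous_on_const)
  then show ?thesis
    using continuous_on_cong[OF refl, of S "\<lambda>v. B_theta (f v) (g v)"] eq by simp
qed

lemma Rayleigh_quotient_attains_max:
  assumes V: "subspace V" "V \<subseteq> g0" "V \<noteq> {0}" and H: "H \<in> g0"
  obtains v0 c where "v0 \<in> V" "v0 \<noteq> 0" "B_theta (comm H v0) v0 = c * B_theta v0 v0"
    "\<And>x. x \<in> V \<Longrightarrow> B_theta (comm H x) x \<le> c * B_theta x x"
proof -
  define S where "S = V \<inter> sphere 0 1"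
  define R where "R v = B_theta (comm H v) v / B_theta v v" for v
  have "compact S"
    unfolding S_def using compact_Int_closed[OF compact_sphere closed_subspace[OF V(1)]]
    by (simp add: Int_commute)
  obtain w where w: "w \<in> V" "w \<noteq> 0" using V(3) subspace_0[OF V(1)] by blast
  then have "(1 / norm w) *\<^sub>R w \<in> S" using V(1) by (simp add: S_def subspace_scale)
  then have "S \<noteq> {}" by blast
  have SV: "S \<subseteq> V" and Sg0: "S \<subseteq> g0" using V(2) by (auto simp: S_def)
  have pos: "B_theta v v > 0" if "v \<in> S" for v
    using that Sg0 by (intro B_theta_pos) (auto simp: S_def)
  have "continuous_on S R" unfolding R_def
    using Sg0 H
    by (intro continuous_on_divide continuous_on_B_theta continuous_on_comm continuous_intros)
      (auto simp: comm_in dest: pos)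
  then obtain v0 where v0: "v0 \<in> S" "\<And>y. y \<in> S \<Longrightarrow> R y \<le> R v0"
    using continuous_attains_sup[OF \<open>compact S\<close> \<open>S \<noteq> {}\<close>] by blast
  have homogeneous: "R (r *\<^sub>R x) = R x" if "x \<in> g0" "r \<noteq> 0" for x r
    using that H by (simp add: R_def comm_scaleR_right B_theta_scaleR_left B_theta_scaleR_right
        comm_in g0_scaleR)
  show thesis
  proof
    show "v0 \<in> V" "v0 \<noteq> 0" using v0(1) SV by (auto simp: S_def)
    show "B_theta (comm H v0) v0 = R v0 * B_theta v0 v0"
      using pos[OF v0(1)] by (simp add: R_def)
    show "B_theta (comm H x) x \<le> R v0 * B_theta x x" if x: "x \<in> V" for x
    proof (cases "x = 0")
      case False
      have "x \<in> g0" using x V(2) by blast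
      have "(1 / norm x) *\<^sub>R x \<in> S" using x False V(1) by (simp add: S_def subspace_scale)
      then have "R x \<le> R v0" using v0(2) homogeneous[OF \<open>x \<in> g0\<close>] False by fastforce
      then show ?thesis using B_theta_pos[OF \<open>x \<in> g0\<close> False] by (simp add: R_def divide_le_eq)
    qed simp
  qed
qed

text \<open>\<open>D = c - ad H\<close> is a positive semidefinite \<open>B_theta\<close>-symmetric operator on \<open>V\<close> with
  \<open>B_theta (D v0) v0 = 0\<close>; expanding \<open>B_theta (D (v0 + t u)) (v0 + t u) \<ge> 0\<close> in \<open>t\<close> shows
  \<open>D v0 \<bottom> V\<close>, hence \<open>D v0 = 0\<close>.\<close>

lemma Rayleigh_max_is_eigenvector:
  assumes V: "subspace V" "V \<subseteq> g0" and H: "H \<in> g0" "\<theta> H = - H"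
    and inv: "\<And>v. v \<in> V \<Longrightarrow> comm H v \<in> V"
    and v0: "v0 \<in> V" and eq: "B_theta (comm H v0) v0 = c * B_theta v0 v0"
    and max: "\<And>x. x \<in> V \<Longrightarrow> B_theta (comm H x) x \<le> c * B_theta x x"
  shows "comm H v0 = c *\<^sub>R v0"
proof -
  define D where "D w = c *\<^sub>R w - comm H w" for w
  have Dg0: "D w \<in> g0" if "w \<in> g0" for w
    using that H(1) by (simp add: D_def g0_diff g0_scaleR comm_in)
  have DV: "D w \<in> V" if "w \<in> V" for w
    using that inv V(1) by (simp add: D_def subspace_diff subspace_scale)
  have D_lin: "D (x + t *\<^sub>R y) = D x + t *\<^sub>R D y" for x y t
    by (simp add: D_def comm_add_right comm_scaleR_right algebra_simps)
  have D_sym: "B_theta (D x) y = B_theta x (D y)" if "x \<in> g0" "y \<in> g0" for x y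
    using that H
    by (simp add: D_def B_theta_bilinear g0_scaleR comm_in B_theta_comm_self_adjoint)
  have D_form: "B_theta (D x) x = c * B_theta x x - B_theta (comm H x) x" if "x \<in> g0" for x
    using that H(1) by (simp add: D_def B_theta_bilinear g0_scaleR comm_in)
  have v0g0: "v0 \<in> g0" using v0 V(2) by blast
  have D_nonneg: "B_theta (D x) x \<ge> 0" if "x \<in> V" for x
    using that V(2) max D_form by force
  have orth: "B_theta (D v0) u = 0" if u: "u \<in> V" for u
  proof (rule quadratic_nonneg_imp_linear_coeff_eq_0[OF D_nonneg[OF u]])
    fix t
    have ug0: "u \<in> g0" using u V(2) by blast
    have "v0 + t *\<^sub>R u \<in> V" using v0 u V(1) by (simp add: subspace_add subspace_scale)
    then have "0 \<le> B_theta (D (v0 + t *\<^sub>R u)) (v0 + t *\<^sub>R u)" by (rule D_nonneg)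
    also have "\<dots> = B_theta (D v0) v0 + t * B_theta (D v0) u + t * B_theta (D u) v0
        + t^2 * B_theta (D u) u"
      unfolding D_lin using v0g0 ug0 Dg0
      by (simp add: B_theta_bilinear g0_scaleR g0_add algebra_simps power2_eq_square)
    also have "B_theta (D u) v0 = B_theta (D v0) u"
      using D_sym[OF ug0 v0g0] B_theta_sym[OF ug0 Dg0[OF v0g0]] by simp
    also have "B_theta (D v0) v0 = 0" using D_form[OF v0g0] eq by simp
    finally show "0 \<le> 2 * t * B_theta (D v0) u + t^2 * B_theta (D u) u" by simp
  qed
  have "D v0 = 0"
    using orth[OF DV[OF v0]] B_theta_eq_0_iff[OF Dg0[OF v0g0]] by simp
  then show ?thesis by (simp add: D_def)
qed

lemma comm_eigenvector_exists:
  assumes "subspace V" "V \<subseteq> g0" "V \<noteq> {0}" "H \<in> g0" "\<theta> H = - H"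
    and "\<And>v. v \<in> V \<Longrightarrow> comm H v \<in> V"
  obtains v c where "v \<in> V" "v \<noteq> 0" "comm H v = c *\<^sub>R v"
proof -
  obtain v0 c where "v0 \<in> V" "v0 \<noteq> 0" "B_theta (comm H v0) v0 = c * B_theta v0 v0"
    "\<And>x. x \<in> V \<Longrightarrow> B_theta (comm H x) x \<le> c * B_theta x x"
    using Rayleigh_quotient_attains_max assms(1-4) by metis
  with Rayleigh_max_is_eigenvector[OF assms(1,2,4,5,6)] that show thesis by blast
qed

lemma eigenspace_plus_image:
  fixes c :: real
  assumes V: "subspace V" "V \<subseteq> g0" and H: "H \<in> g0" "\<theta> H = - H"
    and inv: "\<And>v. v \<in> V \<Longrightarrow> comm H v \<in> V"
  defines "f \<equiv> \<lambda>w. comm H w - c *\<^sub>R w"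
  shows "{x + y |x y. x \<in> {v\<in>V. f v = 0} \<and> y \<in> f ` V} = V"
proof -
  define K where "K = {v\<in>V. f v = 0}"
  define R where "R = f ` V"
  have lin: "linear f" unfolding f_def
    by (rule linearI) (simp_all add: comm_add_right comm_scaleR_right algebra_simps)
  have fV: "f v \<in> V" if "v \<in> V" for v
    using that inv V(1) by (simp add: f_def subspace_diff subspace_scale)
  have KV: "K \<subseteq> V" and RV: "R \<subseteq> V" using fV by (auto simp: K_def R_def)
  have sK: "subspace K" unfolding K_def
    using linear_subspace_kernel[OF lin] V(1) subspace_inter by (simp add: Collect_conj_eq Int_commute)
  have sR: "subspace R" unfolding R_def by (rule linear_subspace_image[OF lin V(1)])
  have "K \<inter> R \<subseteq> {0}"
  proof
    fix w assume w: "w \<in> K \<inter> R"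
    then obtain u where u: "u \<in> V" "w = f u" by (auto simp: R_def)
    have wg0: "w \<in> g0" and ug0: "u \<in> g0" using w u KV V(2) by auto
    have "B_theta (f x) y = B_theta x (f y)" if "x \<in> g0" "y \<in> g0" for x y
      using that H unfolding f_def
      by (simp add: B_theta_bilinear g0_scaleR comm_in B_theta_comm_self_adjoint)
    then have "B_theta w w = B_theta u (f w)" using u wg0 ug0 by simp
    also have "f w = 0" using w by (simp add: K_def)
    finally show "w \<in> {0}" using B_theta_eq_0_iff[OF wg0] ug0 B_theta_zero_right by simp
  qed
  then have "dim (K \<inter> R) = 0" by (simp add: dim_eq_0)
  moreover have "dim {x + y |x y. x \<in> K \<and> y \<in> R} + dim (K \<inter> R) = dim K + dim R"
    by (rule dim_sums_Int[OF sK sR])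
  moreover have "dim K + dim R = dim V"
    unfolding K_def R_def by (rule dim_kernel_add_dim_image[OF lin V(1)])
  ultimately have "dim V \<le> dim {x + y |x y. x \<in> K \<and> y \<in> R}" by linarith
  moreover have "{x + y |x y. x \<in> K \<and> y \<in> R} \<subseteq> V"
    using KV RV V(1) subspace_add by blast
  ultimately have "{x + y |x y. x \<in> K \<and> y \<in> R} = V"
    using subspace_dim_equal[OF subspace_sums[OF sK sR] V(1)] by blast
  then show ?thesis by (simp only: K_def R_def)
qed

text \<open>The eigenspace and the image of \<open>ad H - c\<close> for an eigenvalue \<open>c\<close> split \<open>V\<close> into two proper
  subspaces, both invariant under everything commuting with \<open>H\<close>.\<close>

lemma comm_split_invariant_subspace:
  assumes V: "subspace V" "V \<subseteq> g0" and H: "H \<in> g0" "\<theta> H = - H"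
    and inv: "\<And>v. v \<in> V \<Longrightarrow> comm H v \<in> V" and not_scalar: "\<not> (\<exists>c. \<forall>v\<in>V. comm H v = c *\<^sub>R v)"
  obtains K R where "subspace K" "subspace R" "K \<subseteq> V" "R \<subseteq> V" "dim K < dim V" "dim R < dim V"
    "V = {x + y |x y. x \<in> K \<and> y \<in> R}"
    "\<And>H'. comm H H' = 0 \<Longrightarrow> \<forall>v\<in>V. comm H' v \<in> V \<Longrightarrow> (\<forall>v\<in>K. comm H' v \<in> K) \<and> (\<forall>v\<in>R. comm H' v \<in> R)"
proof -
  have "V \<noteq> {0}" using not_scalar by auto
  then obtain v0 c where v0: "v0 \<in> V" "v0 \<noteq> 0" "comm H v0 = c *\<^sub>R v0"
    using comm_eigenvector_exists[OF V _ H inv] by blast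
  define f where "f w = comm H w - c *\<^sub>R w" for w
  define K where "K = {v\<in>V. f v = 0}"
  define R where "R = f ` V"
  have lin: "linear f" unfolding f_def
    by (rule linearI) (simp_all add: comm_add_right comm_scaleR_right algebra_simps)
  show thesis
  proof
    show sK: "subspace K" unfolding K_def
      using linear_subspace_kernel[OF lin] V(1) subspace_inter by (simp add: Collect_conj_eq Int_commute)
    show sR: "subspace R" unfolding R_def by (rule linear_subspace_image[OF lin V(1)])
    show KV: "K \<subseteq> V" and "R \<subseteq> V"
      using inv V(1) by (auto simp: K_def R_def f_def subspace_diff subspace_scale)
    have "K \<noteq> V" using not_scalar by (auto simp: K_def f_def)
    then show "dim K < dim V"
      using subspace_dim_equal[OF sK V(1) KV] dim_subset[OF KV] by fastforce
    have "dim K \<noteq> 0" using v0 by (auto simp: K_def f_def dim_eq_0)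
    moreover have "dim K + dim R = dim V"
      unfolding K_def R_def by (rule dim_kernel_add_dim_image[OF lin V(1)])
    ultimately show "dim R < dim V" by linarith
    show "V = {x + y |x y. x \<in> K \<and> y \<in> R}"
      using eigenspace_plus_image[OF V H inv, of c] by (simp add: K_def R_def f_def)
    fix H' assume H': "comm H H' = 0" "\<forall>v\<in>V. comm H' v \<in> V"
    have "f (comm H' w) = comm H' (f w)" for w
      using comm_Jacobi[of H H' w] H'(1) by (simp add: f_def comm_diff_right comm_scaleR_right)
    then show "(\<forall>v\<in>K. comm H' v \<in> K) \<and> (\<forall>v\<in>R. comm H' v \<in> R)"
      using H'(2) by (auto simp: K_def R_def) (metis image_eqI)
  qed
qed

definition joint_eigvecs :: "'n cmat set \<Rightarrow> 'n cmat set" where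
  "joint_eigvecs a = {X \<in> g0. \<forall>H\<in>a. \<exists>c. comm H X = c *\<^sub>R X}"

lemma span_joint_eigvecs:
  assumes a: "a \<subseteq> ppart g0 \<theta>" and ab: "abelian a"
  shows "subspace V \<Longrightarrow> V \<subseteq> g0 \<Longrightarrow> (\<forall>H\<in>a. \<forall>v\<in>V. comm H v \<in> V)
    \<Longrightarrow> V \<subseteq> span (joint_eigvecs a \<inter> V)"
proof (induction "dim V" arbitrary: V rule: less_induct)
  case less
  note V = less.prems
  show ?case
  proof (cases "\<forall>H\<in>a. \<exists>c. \<forall>v\<in>V. comm H v = c *\<^sub>R v")
    case True
    then have "V \<subseteq> joint_eigvecs a \<inter> V" using V(2) by (auto simp: joint_eigvecs_def)
    then show ?thesis using span_superset by blast
  next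
    case False
    then obtain H where H: "H \<in> a" and not_scalar: "\<not> (\<exists>c. \<forall>v\<in>V. comm H v = c *\<^sub>R v)" by blast
    have Hp: "H \<in> g0" "\<theta> H = - H" using a H by (auto simp: ppart_def)
    have invH: "\<And>v. v \<in> V \<Longrightarrow> comm H v \<in> V" using V(3) H by blast
    obtain K R where KR: "subspace K" "subspace R" "K \<subseteq> V" "R \<subseteq> V" "dim K < dim V" "dim R < dim V"
      "V = {x + y |x y. x \<in> K \<and> y \<in> R}"
      "\<And>H'. comm H H' = 0 \<Longrightarrow> \<forall>v\<in>V. comm H' v \<in> V \<Longrightarrow> (\<forall>v\<in>K. comm H' v \<in> K) \<and> (\<forall>v\<in>R. comm H' v \<in> R)"
      using comm_split_invariant_subspace[OF V(1,2) Hp invH not_scalar] by blast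
    have "comm H H' = 0" if "H' \<in> a" for H'
      using ab H that by (simp add: abelian_def)
    then have "\<forall>H'\<in>a. \<forall>v\<in>K. comm H' v \<in> K" "\<forall>H'\<in>a. \<forall>v\<in>R. comm H' v \<in> R"
      using KR(8) V(3) by blast+
    then have "K \<subseteq> span (joint_eigvecs a \<inter> V)" "R \<subseteq> span (joint_eigvecs a \<inter> V)"
      using less.hyps[OF KR(5,1)] less.hyps[OF KR(6,2)] KR(3,4) V(2)
        span_mono[of "joint_eigvecs a \<inter> K" "joint_eigvecs a \<inter> V"]
        span_mono[of "joint_eigvecs a \<inter> R" "joint_eigvecs a \<inter> V"] by blast+
    then show ?thesis using KR(7) span_add by blast
  qed
qed

end

section \<open>The Iwasawa decomposition \<open>g0 = k0 \<oplus> a0 \<oplus> n0\<close>\<close>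

lemma max_abelian_in_centralizer:
  assumes max: "max_abelian_in p a" and p: "subspace p" and P: "P \<in> p"
    and comm_P: "\<And>A. A \<in> a \<Longrightarrow> comm A P = 0"
  shows "P \<in> a"
proof -
  have a: "subspace a" "a \<subseteq> p" "abelian a" using max by (simp_all add: max_abelian_in_def)
  define b where "b = {A + t *\<^sub>R P |A t. A \<in> a}"
  have "b = {x + y |x y. x \<in> a \<and> y \<in> span {P}}"
    unfolding b_def span_singleton by blast
  then have "subspace b" using subspace_sums[OF a(1) subspace_span] by simp
  moreover have "a \<subseteq> b" unfolding b_def by force
  moreover have "b \<subseteq> p"
    unfolding b_def using a(2) P subspace_add[OF p] subspace_scale[OF p] by blast
  moreover have "abelian b"
    unfolding abelian_def b_def
  proof clarify
    fix A t A' t' assume A: "A \<in> a" "A' \<in> a"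
    have "comm P A' = - comm A' P" by (simp add: comm_def)
    then show "comm (A + t *\<^sub>R P) (A' + t' *\<^sub>R P) = 0"
      using a(3) A comm_P
      by (simp add: abelian_def comm_add_left comm_add_right comm_scaleR_left comm_scaleR_right)
  qed
  ultimately have "b = a" using max by (simp add: max_abelian_in_def)
  moreover have "P \<in> b" unfolding b_def using subspace_0[OF a(1)]
    by (metis (mono_tags, lifting) add_0 mem_Collect_eq scaleR_one)
  ultimately show ?thesis by simp
qed

context cartan_algebra
begin

lemma B_theta_comm_eigenvectors_orthogonal:
  assumes H: "H \<in> g0" "\<theta> H = - H" and Y: "Y \<in> g0" "comm H Y = a *\<^sub>R Y"
    and Z: "Z \<in> g0" "comm H Z = b *\<^sub>R Z" and "a \<noteq> b"
  shows "B_theta Y Z = 0"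
proof -
  have "a * B_theta Y Z = B_theta (comm H Y) Z" using Y Z by (simp add: B_theta_scaleR_left)
  also have "\<dots> = B_theta Y (comm H Z)" by (rule B_theta_comm_self_adjoint[OF H Y(1) Z(1)])
  also have "\<dots> = b * B_theta Y Z" using Y Z by (simp add: B_theta_scaleR_right)
  finally show ?thesis using \<open>a \<noteq> b\<close> by simp
qed

definition comm_eigvecs :: "'n cmat \<Rightarrow> real set \<Rightarrow> 'n cmat set" where
  "comm_eigvecs H I = {Y \<in> g0. \<exists>a\<in>I. comm H Y = a *\<^sub>R Y}"

lemma B_theta_span_comm_eigvecs_orthogonal:
  assumes H: "H \<in> g0" "\<theta> H = - H" and "I \<inter> J = {}"
    and "y \<in> span (comm_eigvecs H I)" "z \<in> span (comm_eigvecs H J)"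
  shows "B_theta y z = 0"
proof (rule B_theta_orthogonal_spans[OF _ _ _ assms(4,5)])
  show "comm_eigvecs H I \<subseteq> g0" "comm_eigvecs H J \<subseteq> g0" by (auto simp: comm_eigvecs_def)
  fix y z assume "y \<in> comm_eigvecs H I" "z \<in> comm_eigvecs H J"
  then obtain a b where "y \<in> g0" "comm H y = a *\<^sub>R y" "z \<in> g0" "comm H z = b *\<^sub>R z" "a \<noteq> b"
    using \<open>I \<inter> J = {}\<close> unfolding comm_eigvecs_def by blast
  then show "B_theta y z = 0" by (rule B_theta_comm_eigenvectors_orthogonal[OF H])
qed

end

locale iwasawa_algebra = cartan_algebra g0 \<theta> for g0 :: "'n::finite cmat set" and \<theta> +
  fixes a0 :: "'n cmat set" and H0 :: "'n cmat"
  assumes max_abelian: "max_abelian_in (ppart g0 \<theta>) a0"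
    and regular: "regular_element g0 a0 H0"
begin

abbreviation "k0 \<equiv> kpart g0 \<theta>"
abbreviation "n0 \<equiv> npart g0 a0 H0"
abbreviation "u0 \<equiv> upart g0 a0 H0"

lemma subspace_a0: "subspace a0" and a0_ppart: "a0 \<subseteq> ppart g0 \<theta>" and abelian_a0: "abelian a0"
  using max_abelian unfolding max_abelian_in_def by blast+

lemma a0_g0: "H \<in> a0 \<Longrightarrow> H \<in> g0" and theta_a0: "H \<in> a0 \<Longrightarrow> \<theta> H = - H"
  using a0_ppart by (auto simp: ppart_def)

lemma H0_a0: "H0 \<in> a0" and restricted_root_H0_neq_0: "restricted_root g0 a0 r \<Longrightarrow> r H0 \<noteq> 0"
  using regular by (auto simp: regular_element_def)

lemma subspace_k0: "subspace k0"
  unfolding subspace_def kpart_def by (auto simp: g0_zero theta_zero g0_add theta_add g0_scaleR theta_scaleR)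

lemma subspace_ppart: "subspace (ppart g0 \<theta>)"
  unfolding subspace_def ppart_def by (auto simp: g0_zero theta_zero g0_add theta_add g0_scaleR theta_scaleR)

lemma n0_g0: "n0 \<subseteq> g0"
  unfolding npart_def using subspace_g0 by (intro span_minimal) (auto simp: root_space_def)

lemma subspace_u0: "subspace u0"
  unfolding upart_def npart_def by (rule subspace_sums[OF subspace_a0 subspace_span])

lemma a0_u0: "A \<in> a0 \<Longrightarrow> A \<in> u0"
  unfolding upart_def npart_def using span_zero by force

lemma n0_u0: "N \<in> n0 \<Longrightarrow> N \<in> u0"
  unfolding upart_def using subspace_0[OF subspace_a0] by force

lemma root_space_n0:
  "restricted_root g0 a0 r \<Longrightarrow> r H0 > 0 \<Longrightarrow> X \<in> root_space g0 a0 r \<Longrightarrow> X \<in> n0"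
  unfolding npart_def by (rule span_base) blast

lemma comm_a0_theta: "H \<in> a0 \<Longrightarrow> Y \<in> g0 \<Longrightarrow> comm H (\<theta> Y) = - \<theta> (comm H Y)"
  using theta_comm[OF a0_g0, of H Y] theta_a0[of H] by (simp add: comm_minus_left)

definition k0_plus_u0 :: "'n cmat set" where
  "k0_plus_u0 = {X. \<exists>K\<in>k0. X - K \<in> u0}"

lemma subspace_k0_plus_u0: "subspace k0_plus_u0"
  unfolding subspace_def k0_plus_u0_def
proof (intro conjI ballI allI CollectI)
  show "\<exists>K\<in>k0. 0 - K \<in> u0" using subspace_0[OF subspace_k0] subspace_0[OF subspace_u0] by force
next
  fix x y assume "x \<in> {X. \<exists>K\<in>k0. X - K \<in> u0}" "y \<in> {X. \<exists>K\<in>k0. X - K \<in> u0}"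
  then obtain K L where "K \<in> k0" "x - K \<in> u0" "L \<in> k0" "y - L \<in> u0" by blast
  then have "K + L \<in> k0" "(x + y) - (K + L) \<in> u0"
    using subspace_add[OF subspace_k0] subspace_add[OF subspace_u0, of "x - K" "y - L"]
    by (auto simp: algebra_simps)
  then show "\<exists>K\<in>k0. x + y - K \<in> u0" by blast
next
  fix c :: real and x assume "x \<in> {X. \<exists>K\<in>k0. X - K \<in> u0}"
  then obtain K where "K \<in> k0" "x - K \<in> u0" by blast
  then have "c *\<^sub>R K \<in> k0" "c *\<^sub>R x - c *\<^sub>R K \<in> u0"
    using subspace_scale[OF subspace_k0] subspace_scale[OF subspace_u0, of "x - K" c]
    by (auto simp: algebra_simps)
  then show "\<exists>K\<in>k0. c *\<^sub>R x - K \<in> u0" by blast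
qed

lemma joint_eigvec_root_space:
  assumes X: "X \<in> joint_eigvecs a0" "X \<noteq> 0"
  obtains r where "\<forall>H. H \<notin> a0 \<longrightarrow> r H = 0" "\<forall>H\<in>a0. \<forall>H'\<in>a0. r (H + H') = r H + r H'"
    "\<forall>H\<in>a0. \<forall>c. r (c *\<^sub>R H) = c * r H" "X \<in> root_space g0 a0 r"
proof
  define r where "r H = (if H \<in> a0 then (SOME c. comm H X = c *\<^sub>R X) else 0)" for H
  have rX: "comm H X = r H *\<^sub>R X" if "H \<in> a0" for H
    using X(1) that unfolding joint_eigvecs_def r_def by (auto intro: someI_ex)
  show "\<forall>H. H \<notin> a0 \<longrightarrow> r H = 0" by (simp add: r_def)
  show "\<forall>H\<in>a0. \<forall>H'\<in>a0. r (H + H') = r H + r H'"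
  proof (intro ballI)
    fix H H' assume "H \<in> a0" "H' \<in> a0"
    then have "r (H + H') *\<^sub>R X = comm (H + H') X"
      using rX subspace_add[OF subspace_a0] by simp
    also have "\<dots> = (r H + r H') *\<^sub>R X"
      using rX \<open>H \<in> a0\<close> \<open>H' \<in> a0\<close> by (simp add: comm_add_left scaleR_add_left)
    finally show "r (H + H') = r H + r H'" using X(2) by simp
  qed
  show "\<forall>H\<in>a0. \<forall>c. r (c *\<^sub>R H) = c * r H"
  proof (intro ballI allI)
    fix H c assume "H \<in> a0"
    then have "r (c *\<^sub>R H) *\<^sub>R X = comm (c *\<^sub>R H) X"
      using rX subspace_scale[OF subspace_a0] by simp
    also have "\<dots> = (c * r H) *\<^sub>R X" using rX \<open>H \<in> a0\<close> by (simp add: comm_scaleR_left)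
    finally show "r (c *\<^sub>R H) = c * r H" using X(2) by simp
  qed
  show "X \<in> root_space g0 a0 r" using X(1) rX by (simp add: root_space_def joint_eigvecs_def)
qed

text \<open>On the centraliser of \<open>a0\<close>, write \<open>X = (X + \<theta> X)/2 + (X - \<theta> X)/2\<close>; the second summand
  lies in \<open>p0\<close> and centralises \<open>a0\<close>, so it lies in \<open>a0\<close> by maximality.\<close>

lemma centralizer_a0_k0_plus_u0:
  assumes X: "X \<in> g0" and cent: "\<And>H. H \<in> a0 \<Longrightarrow> comm H X = 0"
  shows "X \<in> k0_plus_u0"
proof -
  define K where "K = (1/2) *\<^sub>R (X + \<theta> X)"
  define P where "P = (1/2) *\<^sub>R (X - \<theta> X)"
  have "X = (1/2) *\<^sub>R X + (1/2) *\<^sub>R X" by (simp flip: scaleR_add_left)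
  then have "X - K = P"
    unfolding K_def P_def scaleR_add_right scaleR_diff_right by simp
  have "K \<in> k0"
    using X theta_in[OF X]
    by (simp add: kpart_def K_def g0_scaleR g0_add theta_scaleR theta_add theta_theta add.commute)
  moreover have "P \<in> ppart g0 \<theta>"
    using X theta_in[OF X]
    by (simp add: ppart_def P_def g0_scaleR g0_diff theta_scaleR theta_diff theta_theta scaleR_diff_right)
  moreover have "comm H P = 0" if "H \<in> a0" for H
    using cent[OF that] comm_a0_theta[OF that X] theta_zero
    by (simp add: P_def comm_scaleR_right comm_diff_right)
  ultimately have "P \<in> a0"
    using max_abelian_in_centralizer[OF max_abelian subspace_ppart] by blast
  then show ?thesis
    using \<open>K \<in> k0\<close> \<open>X - K = P\<close> a0_u0 by (auto simp: k0_plus_u0_def)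
qed

lemma theta_root_space:
  assumes "X \<in> root_space g0 a0 r"
  shows "\<theta> X \<in> root_space g0 a0 (\<lambda>H. - r H)"
  using assms theta_in by (simp add: root_space_def comm_a0_theta theta_scaleR)

lemma restricted_root_uminus:
  assumes "restricted_root g0 a0 r"
  shows "restricted_root g0 a0 (\<lambda>H. - r H)"
proof -
  have "0 \<in> root_space g0 a0 r" using g0_zero by (simp add: root_space_def)
  then obtain X where X: "X \<in> root_space g0 a0 r" "X \<noteq> 0"
    using assms by (auto simp: restricted_root_def)
  have "X \<in> g0" using X by (simp add: root_space_def)
  then have "\<theta> X \<noteq> 0" using X(2) theta_theta theta_zero by metis
  then have "root_space g0 a0 (\<lambda>H. - r H) \<noteq> {0}" using theta_root_space[OF X(1)] by blast
  then show ?thesis using assms by (auto simp: restricted_root_def)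
qed

lemma root_space_k0_plus_u0:
  assumes r: "restricted_root g0 a0 r" and X: "X \<in> root_space g0 a0 r"
  shows "X \<in> k0_plus_u0"
proof (cases "r H0 > 0")
  case True
  then have "X - 0 \<in> u0" using root_space_n0[OF r _ X] n0_u0 by simp
  then show ?thesis using subspace_0[OF subspace_k0] by (auto simp: k0_plus_u0_def intro!: bexI[of _ 0])
next
  case False
  then have "- r H0 > 0" using restricted_root_H0_neq_0[OF r] by simp
  then have "\<theta> X \<in> n0"
    using root_space_n0[OF restricted_root_uminus[OF r] _ theta_root_space[OF X]] by simp
  then have "- \<theta> X \<in> n0" unfolding npart_def by (rule span_neg)
  then have "X - (X + \<theta> X) \<in> u0" using n0_u0 by simp
  moreover have "X \<in> g0" using X by (simp add: root_space_def)
  then have "X + \<theta> X \<in> k0"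
    by (simp add: kpart_def g0_add theta_in theta_add theta_theta)
  ultimately show ?thesis unfolding k0_plus_u0_def by blast
qed

lemma joint_eigvecs_k0_plus_u0: "joint_eigvecs a0 \<subseteq> k0_plus_u0"
proof
  fix X assume X: "X \<in> joint_eigvecs a0"
  show "X \<in> k0_plus_u0"
  proof (cases "X = 0")
    case True
    then show ?thesis using subspace_0[OF subspace_k0_plus_u0] by simp
  next
    case False
    then obtain r where r: "\<forall>H. H \<notin> a0 \<longrightarrow> r H = 0" "\<forall>H\<in>a0. \<forall>H'\<in>a0. r (H + H') = r H + r H'"
      "\<forall>H\<in>a0. \<forall>c. r (c *\<^sub>R H) = c * r H" "X \<in> root_space g0 a0 r"
      using joint_eigvec_root_space[OF X] by blast
    show ?thesis
    proof (cases "\<exists>H\<in>a0. r H \<noteq> 0")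
      case True
      then have "restricted_root g0 a0 r" using r False by (auto simp: restricted_root_def)
      then show ?thesis by (rule root_space_k0_plus_u0[OF _ r(4)])
    next
      case False
      then show ?thesis
        using r(4) by (intro centralizer_a0_k0_plus_u0) (auto simp: root_space_def)
    qed
  qed
qed

lemma iwasawa_exists:
  assumes "X \<in> g0"
  obtains K where "K \<in> k0" "X - K \<in> u0"
proof -
  have "g0 \<subseteq> span (joint_eigvecs a0 \<inter> g0)"
    using span_joint_eigvecs[OF a0_ppart abelian_a0 subspace_g0] a0_ppart comm_in
    by (auto simp: ppart_def)
  also have "\<dots> \<subseteq> k0_plus_u0"
    using joint_eigvecs_k0_plus_u0 subspace_k0_plus_u0 by (intro span_minimal) auto
  finally show thesis using assms that by (auto simp: k0_plus_u0_def)
qed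

lemma H0_g0: "H0 \<in> g0" and theta_H0: "\<theta> H0 = - H0"
  using a0_g0[OF H0_a0] theta_a0[OF H0_a0] by simp_all

lemma a0_span_comm_eigvecs_H0: "A \<in> a0 \<Longrightarrow> A \<in> span (comm_eigvecs H0 {0})"
  using abelian_a0 H0_a0 a0_g0 by (intro span_base) (auto simp: comm_eigvecs_def abelian_def)

lemma n0_span_comm_eigvecs_H0: "n0 \<subseteq> span (comm_eigvecs H0 {0<..})"
  unfolding npart_def using H0_a0
  by (intro span_mono) (auto simp: comm_eigvecs_def root_space_def)

lemma theta_n0_span_comm_eigvecs_H0:
  assumes "N \<in> n0"
  shows "\<theta> N \<in> span (comm_eigvecs H0 {..<0})"
proof -
  have "subspace {Y \<in> g0. \<theta> Y \<in> span (comm_eigvecs H0 {..<0})}"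
    unfolding subspace_def
    by (auto simp: g0_zero theta_zero span_zero g0_add theta_add span_add g0_scaleR theta_scaleR span_scale)
  moreover have "\<theta> Y \<in> span (comm_eigvecs H0 {..<0})" if pos: "Y \<in> comm_eigvecs H0 {0<..}" for Y
  proof -
    obtain a where Y: "Y \<in> g0" "a > 0" "comm H0 Y = a *\<^sub>R Y"
      using pos by (auto simp: comm_eigvecs_def)
    then have "comm H0 (\<theta> Y) = (- a) *\<^sub>R \<theta> Y"
      using comm_a0_theta[OF H0_a0 Y(1)] theta_scaleR[OF Y(1)] by simp
    then have "\<theta> Y \<in> comm_eigvecs H0 {..<0}" using Y theta_in unfolding comm_eigvecs_def
      by (intro CollectI conjI bexI[of _ "- a"]) auto
    then show ?thesis by (rule span_base)
  qed
  then have "comm_eigvecs H0 {0<..} \<subseteq> {Y \<in> g0. \<theta> Y \<in> span (comm_eigvecs H0 {..<0})}"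
    by (auto simp: comm_eigvecs_def)
  ultimately have "span (comm_eigvecs H0 {0<..}) \<subseteq> {Y \<in> g0. \<theta> Y \<in> span (comm_eigvecs H0 {..<0})}"
    by (rule span_minimal[rotated])
  then show ?thesis using assms n0_span_comm_eigvecs_H0 by blast
qed

text \<open>If \<open>A + N \<in> k0\<close> then \<open>\<theta> N = 2 A + N\<close>; here \<open>A\<close>, \<open>N\<close> and \<open>\<theta> N\<close> lie in the
  zero, positive and negative eigenspaces of \<open>ad H0\<close>, which are \<open>B_theta\<close>-orthogonal.\<close>

lemma k0_Int_u0: "k0 \<inter> u0 = {0}"
proof -
  have "D = 0" if D: "D \<in> k0" "D \<in> u0" for D
  proof -
    obtain A N where AN: "D = A + N" "A \<in> a0" "N \<in> n0" using D(2) unfolding upart_def by blast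
    have Ag0: "A \<in> g0" and Ng0: "N \<in> g0" using a0_g0 AN n0_g0 by auto
    have disjoint: "{0::real} \<inter> {0<..} = {}" "{0::real} \<inter> {..<0} = {}" "{0<..} \<inter> {..<0::real} = {}"
      by auto
    note orth = B_theta_span_comm_eigvecs_orthogonal[OF H0_g0 theta_H0]
    have A: "A \<in> span (comm_eigvecs H0 {0})" using a0_span_comm_eigvecs_H0[OF AN(2)] .
    have N: "N \<in> span (comm_eigvecs H0 {0<..})" using AN(3) n0_span_comm_eigvecs_H0 by blast
    have thetaN: "\<theta> N \<in> span (comm_eigvecs H0 {..<0})" by (rule theta_n0_span_comm_eigvecs_H0[OF AN(3)])
    have eq: "- A + \<theta> N = A + N"
      using D(1) AN Ag0 Ng0 theta_a0 by (simp add: kpart_def theta_add)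
    have "\<theta> N = (- A + \<theta> N) + A" by simp
    also have "\<dots> = 2 *\<^sub>R A + N" unfolding eq by (simp add: scaleR_2 add_ac)
    finally have "\<theta> N = 2 *\<^sub>R A + N" .
    moreover have "B_theta A N = 0" "B_theta A (\<theta> N) = 0"
      using orth[OF disjoint(1) A N] orth[OF disjoint(2) A thetaN] by simp_all
    ultimately have "B_theta A A = 0"
      using Ag0 Ng0 by (simp add: B_theta_add_right B_theta_scaleR_right g0_scaleR)
    then have "A = 0" using B_theta_eq_0_iff[OF Ag0] by simp
    moreover have "B_theta N (\<theta> N) = 0" using orth[OF disjoint(3) N thetaN] .
    ultimately show "D = 0"
      using \<open>\<theta> N = 2 *\<^sub>R A + N\<close> B_theta_eq_0_iff[OF Ng0] AN(1) by simp
  qed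
  then show ?thesis using subspace_0[OF subspace_k0] subspace_0[OF subspace_u0] by auto
qed

lemma proj_k_eqI:
  assumes "K \<in> k0" "X - K \<in> u0"
  shows "proj_k k0 u0 X = K"
  unfolding proj_k_def
proof (rule the_equality)
  show "K \<in> k0 \<and> X - K \<in> u0" using assms by blast
  fix K' assume K': "K' \<in> k0 \<and> X - K' \<in> u0"
  have "K' - K \<in> k0" using K' assms(1) by (blast intro: subspace_diff[OF subspace_k0])
  moreover have "(X - K) - (X - K') \<in> u0" using K' assms(2) subspace_diff[OF subspace_u0] by blast
  then have "K' - K \<in> u0" by simp
  ultimately have "K' - K \<in> k0 \<inter> u0" by blast
  then show "K' = K" unfolding k0_Int_u0 by simp
qed

end

section \<open>Symmetries of the Iwasawa decomposition\<close>

locale iwasawa_symmetry = iwasawa_algebra g0 \<theta> a0 H0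
  for g0 :: "'n::finite cmat set" and \<theta> a0 H0 +
  fixes \<phi> :: "'n cmat \<Rightarrow> 'n cmat"
  assumes linear: "linear \<phi>"
    and maps_g0: "X \<in> g0 \<Longrightarrow> \<phi> X \<in> g0"
    and comm_hom: "\<phi> (comm X Y) = comm (\<phi> X) (\<phi> Y)"
    and theta_commute: "X \<in> g0 \<Longrightarrow> \<theta> (\<phi> X) = \<phi> (\<theta> X)"
    and fixes_a0: "H \<in> a0 \<Longrightarrow> \<phi> H = H"
begin

lemma maps_k0: "K \<in> k0 \<Longrightarrow> \<phi> K \<in> k0"
  using maps_g0 theta_commute by (simp add: kpart_def)

lemma maps_root_space:
  assumes X: "X \<in> root_space g0 a0 r"
  shows "\<phi> X \<in> root_space g0 a0 r"
proof -
  have "comm H (\<phi> X) = r H *\<^sub>R \<phi> X" if "H \<in> a0" for H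
  proof -
    have "comm H (\<phi> X) = \<phi> (comm H X)" using comm_hom[of H X] fixes_a0[OF that] by simp
    then show ?thesis using X that linear_scale[OF linear] by (simp add: root_space_def)
  qed
  then show ?thesis using X maps_g0 by (simp add: root_space_def)
qed

lemma maps_n0: "N \<in> n0 \<Longrightarrow> \<phi> N \<in> n0"
proof -
  let ?S = "\<Union>{root_space g0 a0 r |r. restricted_root g0 a0 r \<and> r H0 > 0}"
  assume "N \<in> n0"
  then have "\<phi> N \<in> span (\<phi> ` ?S)"
    using linear_span_image[OF linear] by (auto simp: npart_def)
  moreover have "\<phi> ` ?S \<subseteq> ?S" using maps_root_space by blast
  ultimately show "\<phi> N \<in> n0" unfolding npart_def using span_mono by blast
qed

lemma maps_u0: "U \<in> u0 \<Longrightarrow> \<phi> U \<in> u0"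
  using maps_n0 fixes_a0 linear_add[OF linear] unfolding upart_def by fastforce

lemma proj_k_commute:
  assumes "X \<in> g0"
  shows "proj_k k0 u0 (\<phi> X) = \<phi> (proj_k k0 u0 X)"
proof -
  obtain K where K: "K \<in> k0" "X - K \<in> u0" using iwasawa_exists[OF assms] by blast
  then have "\<phi> X - \<phi> K \<in> u0" using maps_u0 linear_diff[OF linear] by metis
  then show ?thesis using proj_k_eqI[OF maps_k0[OF K(1)]] proj_k_eqI[OF K] by simp
qed

lemma toda_commute: "X \<in> g0 \<Longrightarrow> toda k0 u0 (\<phi> X) = \<phi> (toda k0 u0 X)"
  by (simp add: toda_def proj_k_commute comm_hom)

end

section \<open>Conjugation by \<open>M0\<close>\<close>

lemma differential_conjugate:
  fixes m :: "'n::finite cmat"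
  assumes G: "closed_matrix_group G" and hom: "group_hom_on G \<Theta>" and d: "is_differential G \<Theta> \<theta>"
    and m: "m \<in> G" and Y: "Y \<in> lie_alg G"
  shows "\<theta> (m ** Y ** matrix_inv m) = \<Theta> m ** \<theta> Y ** matrix_inv (\<Theta> m)"
proof (rule mexp_scaleR_inject, rule allI)
  fix t :: real
  note m_inv = closed_matrix_group_inverse[OF G m]
  have "\<Theta> m \<in> G" using hom m by (auto simp: group_hom_on_def)
  note Theta_m_inv = closed_matrix_group_inverse[OF G this]
  have conj: "mexp (t *\<^sub>R (g ** Z ** matrix_inv g)) = g ** mexp (t *\<^sub>R Z) ** matrix_inv g"
    if "g ** matrix_inv g = mat 1" "matrix_inv g ** g = mat 1" for g Z :: "'n cmat"
    using mexp_conjugate[OF that, of "t *\<^sub>R Z"] by (simp add: matrix_scaleR_mult_left matrix_scaleR_mult_right)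
  have Yt: "mexp (t *\<^sub>R Y) \<in> G" using Y by (simp add: lie_alg_def)
  have "m ** Y ** matrix_inv m \<in> lie_alg G"
    by (rule lie_alg_conjugate[OF G m m_inv Y])
  then have "mexp (t *\<^sub>R \<theta> (m ** Y ** matrix_inv m)) = \<Theta> (mexp (t *\<^sub>R (m ** Y ** matrix_inv m)))"
    using d by (simp add: is_differential_def)
  also have "\<dots> = \<Theta> (m ** mexp (t *\<^sub>R Y) ** matrix_inv m)"
    using conj m_inv(2,3) by simp
  also have "\<dots> = \<Theta> m ** \<Theta> (mexp (t *\<^sub>R Y)) ** \<Theta> (matrix_inv m)"
    using hom m Yt m_inv(1) G by (simp add: group_hom_on_def closed_matrix_group_def)
  also have "\<dots> = \<Theta> m ** mexp (t *\<^sub>R \<theta> Y) ** matrix_inv (\<Theta> m)"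
    using d Y group_hom_on_inverse[OF G hom m] by (simp add: is_differential_def)
  also have "\<dots> = mexp (t *\<^sub>R (\<Theta> m ** \<theta> Y ** matrix_inv (\<Theta> m)))"
    using conj Theta_m_inv(2,3) by simp
  finally show "mexp (t *\<^sub>R \<theta> (m ** Y ** matrix_inv m))
      = mexp (t *\<^sub>R (\<Theta> m ** \<theta> Y ** matrix_inv (\<Theta> m)))" .
qed

lemma iwasawa_symmetry_conjugate:
  assumes G0: "closed_matrix_group G0" and cartan: "cartan_involution_grp G0 \<Theta> \<theta>"
    and max: "max_abelian_in (ppart (lie_alg G0) \<theta>) a0" and reg: "regular_element (lie_alg G0) a0 H0"
    and m: "m \<in> fixed_points G0 \<Theta>" and cent: "\<forall>H\<in>a0. m ** H ** matrix_inv m = H"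
  shows "iwasawa_symmetry (lie_alg G0) \<theta> a0 H0 (\<lambda>Y. m ** Y ** matrix_inv m)"
proof -
  have hom: "group_hom_on G0 \<Theta>" and d: "is_differential G0 \<Theta> \<theta>"
    and "cartan_involution_alg (lie_alg G0) \<theta>"
    using cartan by (simp_all add: cartan_involution_grp_def)
  moreover have "lie_subalg (lie_alg G0)"
    using subspace_lie_alg[OF G0] lie_alg_comm[OF G0] by (simp add: lie_subalg_def)
  moreover have "m \<in> G0" "\<Theta> m = m" using m by (simp_all add: fixed_points_def)
  moreover note m_inv = closed_matrix_group_inverse[OF G0 \<open>m \<in> G0\<close>]
  ultimately show ?thesis
    using max reg cent linear_conjugate comm_conjugate[OF m_inv(3)]
      lie_alg_conjugate[OF G0 \<open>m \<in> G0\<close> m_inv] differential_conjugate[OF G0 hom d \<open>m \<in> G0\<close>]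
    by (simp add: iwasawa_symmetry_def iwasawa_symmetry_axioms_def iwasawa_algebra_def
        iwasawa_algebra_axioms_def cartan_algebra_def)
qed

theorem lemma4p4:
  fixes G :: "'n::finite cmat set"
    and \<sigma> \<Theta> \<theta> :: "'n cmat \<Rightarrow> 'n cmat"
    and a0 :: "'n cmat set" and H0 :: "'n cmat"
  assumes "complex_semisimple_group G"
    and "antiholo_involution G \<sigma>"
    and "cartan_involution_grp (fixed_points G \<sigma>) \<Theta> \<theta>"
    and "max_abelian_in (ppart (lie_alg (fixed_points G \<sigma>)) \<theta>) a0"
    and "regular_element (lie_alg (fixed_points G \<sigma>)) a0 H0"
  shows "\<forall>m\<in>{k\<in>fixed_points (fixed_points G \<sigma>) \<Theta>. \<forall>X\<in>a0. k ** X ** matrix_inv k = X}.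
           \<forall>X\<in>lie_alg (fixed_points G \<sigma>).
             m ** X ** matrix_inv m \<in> lie_alg (fixed_points G \<sigma>) \<and>
             m ** toda (kpart (lie_alg (fixed_points G \<sigma>)) \<theta>)
                       (upart (lie_alg (fixed_points G \<sigma>)) a0 H0) X ** matrix_inv m
             = toda (kpart (lie_alg (fixed_points G \<sigma>)) \<theta>)
                    (upart (lie_alg (fixed_points G \<sigma>)) a0 H0) (m ** X ** matrix_inv m)"
proof (intro ballI)
  fix m X
  assume m: "m \<in> {k\<in>fixed_points (fixed_points G \<sigma>) \<Theta>. \<forall>X\<in>a0. k ** X ** matrix_inv k = X}"
    and X: "X \<in> lie_alg (fixed_points G \<sigma>)"
  have "closed_matrix_group (fixed_points G \<sigma>)"
    using assms(1,2) by (intro closed_matrix_group_fixed_points)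
      (simp_all add: complex_semisimple_group_def antiholo_involution_def)
  then interpret iwasawa_symmetry "lie_alg (fixed_points G \<sigma>)" \<theta> a0 H0 "\<lambda>Y. m ** Y ** matrix_inv m"
    using iwasawa_symmetry_conjugate assms(3-5) m by blast
  show "m ** X ** matrix_inv m \<in> lie_alg (fixed_points G \<sigma>) \<and>
      m ** toda k0 u0 X ** matrix_inv m = toda k0 u0 (m ** X ** matrix_inv m)"
    using maps_g0[OF X] toda_commute[OF X] by simp
qed

end
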